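(* In the compactification setting described in the context, assume the Reduced Energy Condition holds and let $\sigma\ge 0$ be a constant with $(D-2)|\mathrm{d}A|_{\bar g}\le \sigma$ everywhere on $M_n$. Then on $M_n$ one has the identity $$\bar R_{mn}-(D-2)\bar\nabla_m\bar\nabla_n A=\Lambda\,\bar g_{mn}-(D-2)\,\partial_mA\,\partial_nA+\tfrac{\kappa^2}{2}\Big(T_{mn}-\tfrac1d\,\bar g_{mn}\,T^{(d)}\Big),$$ and consequently the Bakry–Émery Ricci tensor with weight $f=(D-2)A$ satisfies $$\mathrm{Ric}_{\bar g}-\mathrm{Hess}_{\bar g}f\ \geq\ -\Big(|\Lambda|+\frac{\sigma^2}{D-2}\Big)\bar g$$ as symmetric 2-tensors on $M_n$.
   Context: Setting (compactification). Let $D=d+n$ with $d\ge 2$, $n\ge 2$. Let $(M_n,\bar g)$ be a smooth connected Riemannian manifold and $A\in C^\infty(M_n)$ (the warping function). Let $(X_d,g^{(d)})$ be a $d$-dimensional Lorentzian maximally symmetric space with $\mathrm{Ric}(g^{(d)})=\Lambda g^{(d)}$, $\Lambda<0$. On $X_d\times M_n$ consider the $D$-dimensional metric $g_D=e^{2A}\,(g^{(d)}+\bar g)$. Greek indices $\mu,\nu$ refer to $X_d$, Latin $m,n$ to $M_n$, capital $M,N$ to all directions. Assume $g_D$ satisfies the Einstein equations $R_{MN}=\frac{\kappa^2}{2}\big(T_{MN}-g_{MN}\frac{T}{D-2}\big)$ for some symmetric 2-tensor $T_{MN}$ (the stress-energy tensor), with $T=g_D^{MN}T_{MN}$ and $\kappa>0$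 a constant. Set $T^{(d)}:=(g^{(d)})^{\mu\nu}T_{\mu\nu}$ (trace with the unwarped metric $g^{(d)}$). $\bar R_{mn}$ and $\bar\nabla$ denote the Ricci tensor and Levi-Civita connection of $\bar g$. Reduced Energy Condition (REC): the symmetric 2-tensor $T_{mn}-\frac1d\bar g_{mn}T^{(d)}$ on $M_n$ is positive semidefinite at every point. *)

theory Defs
  imports "HOL-Analysis.Analysis"
begin

text \<open>Local-coordinate differential geometry. A metric on an open coordinate
domain U in real^'k is a matrix-valued function G, with components G x $ a $ b.\<close>

definition pd :: "'k::finite \<Rightarrow> (real^'k \<Rightarrow> real) \<Rightarrow> real^'k \<Rightarrow> real" where
  "pd i f x = deriv (\<lambda>t. f (x + t *\<^sub>R axis i 1)) 0"

primrec pds :: "'k::finite list \<Rightarrow> (real^'k \<Rightarrow> real) \<Rightarrow> real^'k \<Rightarrow> real" where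
  "pds [] f = f"
| "pds (i # is) f = pd i (pds is f)"

definition coord_smooth_on :: "(real^'k::finite) set \<Rightarrow> (real^'k \<Rightarrow> real) \<Rightarrow> bool" where
  "coord_smooth_on U f \<longleftrightarrow> (\<forall>is. \<forall>x\<in>U. pds is f differentiable (at x))"

definition smooth_metric_on :: "(real^'k::finite) set \<Rightarrow> (real^'k \<Rightarrow> real^'k^'k) \<Rightarrow> bool" where
  "smooth_metric_on U G \<longleftrightarrow> (\<forall>a b. coord_smooth_on U (\<lambda>x. G x $ a $ b))"

definition sym_mat :: "real^'k^'k \<Rightarrow> bool" where
  "sym_mat M \<longleftrightarrow> transpose M = M"

definition pos_def_mat :: "real^'k::finite^'k \<Rightarrow> bool" where
  "pos_def_mat M \<longleftrightarrow> (\<forall>v. v \<noteq> 0 \<longrightarrow> v \<bullet> (M *v v) > 0)"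

definition psd_form :: "('k::finite \<Rightarrow> 'k \<Rightarrow> real) \<Rightarrow> bool" where
  "psd_form S \<longleftrightarrow> (\<forall>v::real^'k. (\<Sum>a\<in>UNIV. \<Sum>b\<in>UNIV. v $ a * S a b * v $ b) \<ge> 0)"

definition riemannian_on :: "(real^'k::finite) set \<Rightarrow> (real^'k \<Rightarrow> real^'k^'k) \<Rightarrow> bool" where
  "riemannian_on U G \<longleftrightarrow> smooth_metric_on U G \<and>
     (\<forall>x\<in>U. sym_mat (G x) \<and> pos_def_mat (G x))"

text \<open>Lorentzian: symmetric, of signature (-,+,...,+) (Sylvester normal form).\<close>
definition lorentzian_on :: "(real^'k::finite) set \<Rightarrow> (real^'k \<Rightarrow> real^'k^'k) \<Rightarrow> bool" where
  "lorentzian_on U G \<longleftrightarrow> smooth_metric_on U G \<and>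
     (\<forall>x\<in>U. sym_mat (G x) \<and>
        (\<exists>(P::real^'k^'k) i0. invertible P \<and>
           transpose P ** G x ** P = (\<chi> a b. if a = b then (if a = i0 then -1 else 1) else 0)))"

definition christoffel :: "(real^'k::finite \<Rightarrow> real^'k^'k) \<Rightarrow> 'k \<Rightarrow> 'k \<Rightarrow> 'k \<Rightarrow> real^'k \<Rightarrow> real" where
  "christoffel G a b c x = (\<Sum>e\<in>UNIV. matrix_inv (G x) $ a $ e *
      (pd b (\<lambda>y. G y $ e $ c) x + pd c (\<lambda>y. G y $ e $ b) x - pd e (\<lambda>y. G y $ b $ c) x)) / 2"

definition riemann :: "(real^'k::finite \<Rightarrow> real^'k^'k) \<Rightarrow> 'k \<Rightarrow> 'k \<Rightarrow> 'k \<Rightarrow> 'k \<Rightarrow> real^'k \<Rightarrow> real" where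
  "riemann G a b c d x =
     pd c (christoffel G a d b) x - pd d (christoffel G a c b) x
     + (\<Sum>e\<in>UNIV. christoffel G a c e x * christoffel G e d b x
                 - christoffel G a d e x * christoffel G e c b x)"

definition riemann_low :: "(real^'k::finite \<Rightarrow> real^'k^'k) \<Rightarrow> 'k \<Rightarrow> 'k \<Rightarrow> 'k \<Rightarrow> 'k \<Rightarrow> real^'k \<Rightarrow> real" where
  "riemann_low G a b c d x = (\<Sum>e\<in>UNIV. G x $ a $ e * riemann G e b c d x)"

definition ricci :: "(real^'k::finite \<Rightarrow> real^'k^'k) \<Rightarrow> 'k \<Rightarrow> 'k \<Rightarrow> real^'k \<Rightarrow> real" where
  "ricci G b d x = (\<Sum>a\<in>UNIV. riemann G a b a d x)"

definition hess :: "(real^'k::finite \<Rightarrow> real^'k^'k) \<Rightarrow> (real^'k \<Rightarrow> real) \<Rightarrow> 'k \<Rightarrow> 'k \<Rightarrow> real^'k \<Rightarrow> real" where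
  "hess G f a b x = pd a (pd b f) x - (\<Sum>c\<in>UNIV. christoffel G c a b x * pd c f x)"

definition grad_norm :: "(real^'k::finite \<Rightarrow> real^'k^'k) \<Rightarrow> (real^'k \<Rightarrow> real) \<Rightarrow> real^'k \<Rightarrow> real" where
  "grad_norm G f x = sqrt (\<Sum>a\<in>UNIV. \<Sum>b\<in>UNIV. matrix_inv (G x) $ a $ b * pd a f x * pd b f x)"

text \<open>Coordinates on X_d x M_n: index type 'd + 'n.\<close>
definition ypart :: "real^('d::finite + 'n::finite) \<Rightarrow> real^'d" where
  "ypart z = (\<chi> i. z $ Inl i)"

definition xpart :: "real^('d::finite + 'n::finite) \<Rightarrow> real^'n" where
  "xpart z = (\<chi> j. z $ Inr j)"

definition prod_dom :: "(real^'d::finite) set \<Rightarrow> (real^'n::finite) set \<Rightarrow> (real^('d + 'n)) set" where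
  "prod_dom U V = {z. ypart z \<in> U \<and> xpart z \<in> V}"

definition warped_metric ::
  "(real^'d::finite \<Rightarrow> real^'d^'d) \<Rightarrow> (real^'n::finite \<Rightarrow> real^'n^'n) \<Rightarrow> (real^'n \<Rightarrow> real)
     \<Rightarrow> real^('d + 'n) \<Rightarrow> real^('d + 'n)^('d + 'n)" where
  "warped_metric gd gb A z = (\<chi> M N. exp (2 * A (xpart z)) *
      (case (M, N) of
         (Inl \<mu>, Inl \<nu>) \<Rightarrow> gd (ypart z) $ \<mu> $ \<nu>
       | (Inr m, Inr n) \<Rightarrow> gb (xpart z) $ m $ n
       | _ \<Rightarrow> 0))"

definition trace_wrt :: "real^'k::finite^'k \<Rightarrow> real^'k^'k \<Rightarrow> real" where
  "trace_wrt G T = (\<Sum>a\<in>UNIV. \<Sum>b\<in>UNIV. matrix_inv G $ a $ b * T $ a $ b)"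

definition trace_d :: "real^'d::finite^'d \<Rightarrow> real^('d + 'n::finite)^('d + 'n) \<Rightarrow> real" where
  "trace_d gdy T = (\<Sum>\<mu>\<in>UNIV. \<Sum>\<nu>\<in>UNIV. matrix_inv gdy $ \<mu> $ \<nu> * T $ Inl \<mu> $ Inl \<nu>)"

end

theory Submission
  imports Defs
begin

text \<open>In coordinates the warped metric e^(2A) (g_d + g) is block diagonal, so its Christoffel
  symbols are those of the product metric plus the conformal corrections
  delta^a_b d_c A + delta^a_c d_b A - g_bc grad^a A. Expanding the Ricci tensor, the X_d block is
  Ric(g_d) - (Delta A + (D-2) |dA|^2) g_d and the M_n block is
  Ric(g) - (D-2) (Hess A - dA (x) dA) - (Delta A + (D-2) |dA|^2) g.
  As Ric(g_d) = Lambda g_d, tracing the Einstein equation over X_d expresses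
  Delta A + (D-2) |dA|^2 through T^(d), and substituting this into the M_n block gives the identity.
  For the bound, the Bakry--Emery tensor plus (|Lambda| + sigma^2/(D-2)) g equals
  (D-2) ((sigma/(D-2))^2 g - dA (x) dA) + kappa^2/2 (T_mn - g_mn T^(d)/d); the first summand is
  positive semidefinite by Cauchy--Schwarz because |dA|^2 <= (sigma/(D-2))^2, the second by the
  reduced energy condition.\<close>

section \<open>Partial derivatives\<close>

lemma has_real_derivative_along_axis:
  fixes f :: "real^'k::finite \<Rightarrow> real"
  assumes f: "(f has_derivative f') (at (p + s *\<^sub>R axis i 1))"
  shows "((\<lambda>t. f (p + t *\<^sub>R axis i 1)) has_real_derivative f' (axis i 1)) (at s)"
proof -
  have line: "((\<lambda>t::real. p + t *\<^sub>R axis i 1) has_derivative (\<lambda>t. t *\<^sub>R axis i 1)) (at s)"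
    by (auto intro!: derivative_eq_intros)
  have "(\<lambda>t. f' (t *\<^sub>R axis i 1)) = (\<lambda>t. f' (axis i 1) * t)"
    using has_derivative_bounded_linear[OF f]
    by (auto simp: bounded_linear.linear linear_scale)
  then show ?thesis
    using has_derivative_compose[OF line f] by (simp add: has_field_derivative_def)
qed

lemma pd_eq_has_derivative:
  fixes f :: "real^'k::finite \<Rightarrow> real"
  assumes "(f has_derivative f') (at x)"
  shows "pd i f x = f' (axis i 1)"
  using has_real_derivative_along_axis[of f f' x 0 i] assms
  by (simp add: pd_def DERIV_imp_deriv)

lemma has_real_derivative_along_axis_pd:
  fixes f :: "real^'k::finite \<Rightarrow> real"
  assumes "f differentiable (at (p + s *\<^sub>R axis i 1))"
  shows "((\<lambda>t. f (p + t *\<^sub>R axis i 1)) has_real_derivative pd i f (p + s *\<^sub>R axis i 1)) (at s)"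
  using assms has_real_derivative_along_axis pd_eq_has_derivative
  unfolding differentiable_def by metis

lemma pd_cong_open:
  fixes f g :: "real^'k::finite \<Rightarrow> real"
  assumes "open S" "x \<in> S" "\<And>y. y \<in> S \<Longrightarrow> f y = g y"
  shows "pd i f x = pd i g x"
proof -
  let ?S = "(\<lambda>t::real. x + t *\<^sub>R axis i 1) -` S"
  have "open ?S"
    by (intro continuous_open_vimage assms(1) continuous_intros)
  then have "eventually (\<lambda>t. t \<in> ?S) (nhds 0)"
    using assms(2) by (auto simp: eventually_nhds)
  then have "eventually (\<lambda>t. f (x + t *\<^sub>R axis i 1) = g (x + t *\<^sub>R axis i 1)) (nhds 0)"
    by eventually_elim (use assms(3) in blast)
  then show ?thesis unfolding pd_def by (rule deriv_cong_ev) simp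
qed

lemma pd_const [simp]: "pd i (\<lambda>x. c) x = 0"
  by (simp add: pd_def)

lemma pd_add:
  fixes f g :: "real^'k::finite \<Rightarrow> real"
  assumes "f differentiable (at x)" "g differentiable (at x)"
  shows "pd i (\<lambda>x. f x + g x) x = pd i f x + pd i g x"
proof -
  from assms obtain f' g' where f: "(f has_derivative f') (at x)"
    and g: "(g has_derivative g') (at x)"
    by (auto simp: differentiable_def)
  show ?thesis
    using pd_eq_has_derivative[OF has_derivative_add[OF f g]]
    by (simp add: pd_eq_has_derivative[OF f] pd_eq_has_derivative[OF g])
qed

lemma pd_diff:
  fixes f g :: "real^'k::finite \<Rightarrow> real"
  assumes "f differentiable (at x)" "g differentiable (at x)"
  shows "pd i (\<lambda>x. f x - g x) x = pd i f x - pd i g x"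
proof -
  from assms obtain f' g' where f: "(f has_derivative f') (at x)"
    and g: "(g has_derivative g') (at x)"
    by (auto simp: differentiable_def)
  show ?thesis
    using pd_eq_has_derivative[OF has_derivative_diff[OF f g]]
    by (simp add: pd_eq_has_derivative[OF f] pd_eq_has_derivative[OF g])
qed

lemma pd_minus:
  fixes f :: "real^'k::finite \<Rightarrow> real"
  assumes "f differentiable (at x)"
  shows "pd i (\<lambda>x. - f x) x = - pd i f x"
proof -
  from assms obtain f' where f: "(f has_derivative f') (at x)"
    by (auto simp: differentiable_def)
  show ?thesis
    using pd_eq_has_derivative[OF has_derivative_minus[OF f]]
    by (simp add: pd_eq_has_derivative[OF f])
qed

lemma pd_mult:
  fixes f g :: "real^'k::finite \<Rightarrow> real"
  assumes "f differentiable (at x)" "g differentiable (at x)"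
  shows "pd i (\<lambda>x. f x * g x) x = pd i f x * g x + f x * pd i g x"
proof -
  from assms obtain f' g' where f: "(f has_derivative f') (at x)"
    and g: "(g has_derivative g') (at x)"
    by (auto simp: differentiable_def)
  show ?thesis
    using pd_eq_has_derivative[OF has_derivative_mult[OF f g]]
    by (simp add: pd_eq_has_derivative[OF f] pd_eq_has_derivative[OF g])
qed

lemma pd_cmult:
  fixes f :: "real^'k::finite \<Rightarrow> real"
  assumes "f differentiable (at x)"
  shows "pd i (\<lambda>x. c * f x) x = c * pd i f x"
  using pd_mult[OF differentiable_const assms] by simp

lemma pd_multc:
  fixes f :: "real^'k::finite \<Rightarrow> real"
  assumes "f differentiable (at x)"
  shows "pd i (\<lambda>x. f x * c) x = pd i f x * c"
  using pd_mult[OF assms differentiable_const] by simp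

lemma pd_if_zero: "pd i (\<lambda>x. if P then f x else 0) x = (if P then pd i f x else 0)"
  by (cases P) simp_all

lemma differentiable_if_zero:
  "f differentiable (at x) \<Longrightarrow> (\<lambda>x. if P then f x else (0::real)) differentiable (at x)"
  by (cases P) simp_all

lemma pd_sum:
  fixes f :: "'a \<Rightarrow> real^'k::finite \<Rightarrow> real"
  assumes "finite S" "\<And>a. a \<in> S \<Longrightarrow> f a differentiable (at x)"
  shows "pd i (\<lambda>x. \<Sum>a\<in>S. f a x) x = (\<Sum>a\<in>S. pd i (f a) x)"
  using assms
proof (induction S rule: finite_induct)
  case (insert a S)
  then show ?case
    by (simp add: pd_add differentiable_sum)
qed simp

section \<open>Symmetry of second partial derivatives\<close>

definition second_difference :: "(real^'k::finite \<Rightarrow> real) \<Rightarrow> real^'k \<Rightarrow> 'k \<Rightarrow> 'k \<Rightarrow> real \<Rightarrow> real" where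
  "second_difference f x i j h = f (x + h *\<^sub>R axis i 1 + h *\<^sub>R axis j 1) - f (x + h *\<^sub>R axis i 1)
      - f (x + h *\<^sub>R axis j 1) + f x"

lemma second_difference_commute: "second_difference f x i j h = second_difference f x j i h"
  unfolding second_difference_def by (simp add: algebra_simps)

lemma second_difference_mean_value:
  fixes f :: "real^'k::finite \<Rightarrow> real"
  assumes fd: "\<And>s t. \<bar>s\<bar> \<le> \<bar>h\<bar> \<Longrightarrow> \<bar>t\<bar> \<le> \<bar>h\<bar>
    \<Longrightarrow> f differentiable (at (x + t *\<^sub>R axis j 1 + s *\<^sub>R axis i 1))"
  obtains \<xi> where "\<bar>\<xi>\<bar> \<le> \<bar>h\<bar>"
    "second_difference f x i j h
       = h * (pd i f (x + h *\<^sub>R axis j 1 + \<xi> *\<^sub>R axis i 1) - pd i f (x + \<xi> *\<^sub>R axis i 1))"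
proof -
  define \<phi> where "\<phi> s = f (x + h *\<^sub>R axis j 1 + s *\<^sub>R axis i 1) - f (x + s *\<^sub>R axis i 1)" for s
  define \<phi>' where "\<phi>' s = pd i f (x + h *\<^sub>R axis j 1 + s *\<^sub>R axis i 1)
    - pd i f (x + s *\<^sub>R axis i 1)" for s
  have \<phi>_deriv: "(\<phi> has_real_derivative \<phi>' s) (at s)" if "\<bar>s\<bar> \<le> \<bar>h\<bar>" for s
    unfolding \<phi>_def \<phi>'_def
    using fd[OF that order_refl] fd[OF that, of 0]
    by (intro derivative_intros has_real_derivative_along_axis_pd) simp_all
  have "\<exists>\<xi>. \<bar>\<xi>\<bar> \<le> \<bar>h\<bar> \<and> \<phi> h - \<phi> 0 = h * \<phi>' \<xi>"
  proof (cases h "0::real" rule: linorder_cases)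
    case less
    with MVT2[of h 0 \<phi> \<phi>'] \<phi>_deriv obtain z where "h < z" "z < 0" "\<phi> 0 - \<phi> h = (0 - h) * \<phi>' z"
      by fastforce
    then show ?thesis by (intro exI[of _ z]) auto
  next
    case greater
    with MVT2[of 0 h \<phi> \<phi>'] \<phi>_deriv obtain z where "0 < z" "z < h" "\<phi> h - \<phi> 0 = (h - 0) * \<phi>' z"
      by fastforce
    then show ?thesis by (intro exI[of _ z]) auto
  qed simp
  moreover have "second_difference f x i j h = \<phi> h - \<phi> 0"
    unfolding second_difference_def \<phi>_def by (simp add: algebra_simps)
  ultimately show ?thesis using that unfolding \<phi>'_def by auto
qed

lemma norm_axis_sum_le: "norm (t *\<^sub>R axis j 1 + s *\<^sub>R axis i 1 :: real^'k::finite) \<le> \<bar>t\<bar> + \<bar>s\<bar>"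
  using norm_triangle_ineq[of "t *\<^sub>R axis j (1::real)" "s *\<^sub>R axis i 1"] by simp

lemma second_difference_estimate:
  fixes f :: "real^'k::finite \<Rightarrow> real"
  assumes fd: "\<And>s t. \<bar>s\<bar> \<le> \<bar>h\<bar> \<Longrightarrow> \<bar>t\<bar> \<le> \<bar>h\<bar>
    \<Longrightarrow> f differentiable (at (x + t *\<^sub>R axis j 1 + s *\<^sub>R axis i 1))"
    and lin: "linear g'"
    and taylor: "\<And>v. norm v \<le> 2 * \<bar>h\<bar> \<Longrightarrow> \<bar>pd i f (x + v) - pd i f x - g' v\<bar> \<le> e * norm v"
    and h0: "h \<noteq> 0" and e: "e \<ge> 0"
  shows "\<bar>second_difference f x i j h / h\<^sup>2 - g' (axis j 1)\<bar> \<le> 3 * e"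
proof -
  let ?g = "pd i f" and ?ei = "axis i (1::real)" and ?ej = "axis j (1::real)"
  obtain \<xi> where \<xi>: "\<bar>\<xi>\<bar> \<le> \<bar>h\<bar>"
    and mvt: "second_difference f x i j h = h * (?g (x + h *\<^sub>R ?ej + \<xi> *\<^sub>R ?ei) - ?g (x + \<xi> *\<^sub>R ?ei))"
    using second_difference_mean_value[of h f x j i] fd by blast
  define v1 where "v1 = h *\<^sub>R ?ej + \<xi> *\<^sub>R ?ei"
  define v2 where "v2 = \<xi> *\<^sub>R ?ei"
  have nv1: "norm v1 \<le> 2 * \<bar>h\<bar>" using norm_axis_sum_le[of h j \<xi> i] \<xi> by (simp add: v1_def)
  have nv2: "norm v2 \<le> \<bar>h\<bar>" using \<xi> by (simp add: v2_def)
  have "\<bar>?g (x + v1) - ?g x - g' v1\<bar> \<le> e * (2 * \<bar>h\<bar>)"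
    using taylor[OF nv1] mult_left_mono[OF nv1 e] by linarith
  moreover have "\<bar>?g (x + v2) - ?g x - g' v2\<bar> \<le> e * \<bar>h\<bar>"
    using taylor[of v2] nv2 mult_left_mono[OF nv2 e] by force
  ultimately have "\<bar>(?g (x + v1) - ?g x - g' v1) - (?g (x + v2) - ?g x - g' v2)\<bar> \<le> 3 * e * \<bar>h\<bar>"
    by linarith
  moreover have "g' v1 - g' v2 = h * g' ?ej"
    using lin by (simp add: v1_def v2_def linear_add linear_scale)
  then have "second_difference f x i j h / h\<^sup>2 - g' ?ej
      = ((?g (x + v1) - ?g x - g' v1) - (?g (x + v2) - ?g x - g' v2)) / h"
    using h0 unfolding mvt by (simp add: v1_def v2_def power2_eq_square field_simps add.assoc)
  ultimately show ?thesis
    using h0 by (simp add: abs_divide pos_divide_le_eq)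
qed

lemma second_difference_tendsto:
  fixes f :: "real^'k::finite \<Rightarrow> real"
  assumes U: "open U" "x \<in> U" and fd: "\<And>y. y \<in> U \<Longrightarrow> f differentiable (at y)"
    and gd: "pd i f differentiable (at x)"
  shows "((\<lambda>h. second_difference f x i j h / h\<^sup>2) \<longlongrightarrow> pd j (pd i f) x) (at 0)"
  unfolding LIM_eq
proof (intro allI impI)
  fix \<epsilon> :: real assume "\<epsilon> > 0"
  obtain g' where g: "(pd i f has_derivative g') (at x)" using gd by (auto simp: differentiable_def)
  obtain \<delta> where \<delta>: "\<delta> > 0"
    and taylor: "\<And>v. norm v < \<delta> \<Longrightarrow> \<bar>pd i f (x + v) - pd i f x - g' v\<bar> \<le> \<epsilon>/4 * norm v"
    using g \<open>\<epsilon> > 0\<close> unfolding has_derivative_at_alt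
    by (metis add_diff_cancel_left' divide_pos_pos real_norm_def zero_less_numeral)
  obtain r where r: "r > 0" "ball x r \<subseteq> U" using U open_contains_ball by blast
  define d where "d = min \<delta> r / 2"
  have d: "d > 0" "2*d \<le> \<delta>" "2*d \<le> r" using \<delta> r by (auto simp: d_def)
  show "\<exists>s>0. \<forall>h. h \<noteq> 0 \<and> norm (h - 0) < s \<longrightarrow>
          norm (second_difference f x i j h / h\<^sup>2 - pd j (pd i f) x) < \<epsilon>"
  proof (intro exI[of _ d] conjI allI impI)
    show "d > 0" using d(1) .
    fix h :: real assume "h \<noteq> 0 \<and> norm (h - 0) < d"
    then have hd: "\<bar>h\<bar> < d" and h0: "h \<noteq> 0" by auto
    have "\<bar>second_difference f x i j h / h\<^sup>2 - g' (axis j 1)\<bar> \<le> 3 * (\<epsilon>/4)"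
    proof (rule second_difference_estimate)
      show "\<bar>pd i f (x + v) - pd i f x - g' v\<bar> \<le> \<epsilon>/4 * norm v" if "norm v \<le> 2 * \<bar>h\<bar>" for v
        using that hd d by (intro taylor) linarith
      fix s t :: real assume "\<bar>s\<bar> \<le> \<bar>h\<bar>" "\<bar>t\<bar> \<le> \<bar>h\<bar>"
      have "norm (t *\<^sub>R axis j 1 + s *\<^sub>R axis i 1 :: real^'k) < r"
        using norm_axis_sum_le[of t j s i] \<open>\<bar>s\<bar> \<le> \<bar>h\<bar>\<close> \<open>\<bar>t\<bar> \<le> \<bar>h\<bar>\<close> hd d by linarith
      then have "x + (t *\<^sub>R axis j 1 + s *\<^sub>R axis i 1) \<in> ball x r"
        using dist_add_cancel[of x 0 "t *\<^sub>R axis j 1 + s *\<^sub>R axis i 1"] by simp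
      then have "x + t *\<^sub>R axis j 1 + s *\<^sub>R axis i 1 \<in> U"
        using r(2) by (auto simp: add.assoc)
      then show "f differentiable (at (x + t *\<^sub>R axis j 1 + s *\<^sub>R axis i 1))"
        by (rule fd)
    next
      show "linear g'" using g by (rule has_derivative_linear)
    qed (use h0 \<open>\<epsilon> > 0\<close> in simp_all)
    then show "norm (second_difference f x i j h / h\<^sup>2 - pd j (pd i f) x) < \<epsilon>"
      using \<open>\<epsilon> > 0\<close> by (simp add: pd_eq_has_derivative[OF g])
  qed
qed

lemma pd_commute:
  fixes f :: "real^'k::finite \<Rightarrow> real"
  assumes U: "open U" "x \<in> U" and fd: "\<And>y. y \<in> U \<Longrightarrow> f differentiable (at y)"
    and "pd i f differentiable (at x)" "pd j f differentiable (at x)"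
  shows "pd j (pd i f) x = pd i (pd j f) x"
  using second_difference_tendsto[OF U fd, of i j] second_difference_tendsto[OF U fd, of j i] assms(4,5)
  by (auto simp: second_difference_commute intro: LIM_unique)

section \<open>Matrices and quadratic forms\<close>

lemma if_zero_mult: "(if P then x else 0) * (y::real) = (if P then x * y else 0)" by simp
lemma mult_if_zero: "(y::real) * (if P then x else 0) = (if P then y * x else 0)" by simp
lemma sum_if_zero: "(\<Sum>k\<in>S. if P then f k else (0::real)) = (if P then (\<Sum>k\<in>S. f k) else 0)" by simp

lemma matrix_inv_right_left:
  fixes M :: "real^'n::finite^'n"
  assumes "invertible M"
  shows matrix_inv_right: "M ** matrix_inv M = mat 1" and matrix_inv_left: "matrix_inv M ** M = mat 1"
  using someI_ex[OF assms[unfolded invertible_def]] by (simp_all add: matrix_inv_def)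

lemma matrix_inv_unique:
  fixes M :: "real^'n::finite^'n"
  assumes "M ** B = mat 1" "B ** M = mat 1"
  shows "matrix_inv M = B"
proof -
  have "invertible M" using assms by (auto simp: invertible_def)
  then have "B = B ** (M ** matrix_inv M)" by (simp add: matrix_inv_right)
  also have "\<dots> = matrix_inv M" by (simp add: matrix_mul_assoc assms(2))
  finally show ?thesis ..
qed

lemma matrix_inv_mult_left_nth:
  fixes M :: "real^'n::finite^'n"
  assumes "invertible M"
  shows "(\<Sum>k\<in>UNIV. matrix_inv M $ i $ k * M $ k $ j) = (if i = j then 1 else 0)"
  using arg_cong[OF matrix_inv_left[OF assms], of "\<lambda>P. P $ i $ j"]
  by (simp add: matrix_matrix_mult_def mat_def)

lemma matrix_inv_mult_right_nth:
  fixes M :: "real^'n::finite^'n"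
  assumes "invertible M"
  shows "(\<Sum>k\<in>UNIV. M $ i $ k * matrix_inv M $ k $ j) = (if i = j then 1 else 0)"
  using arg_cong[OF matrix_inv_right[OF assms], of "\<lambda>P. P $ i $ j"]
  by (simp add: matrix_matrix_mult_def mat_def)

lemma matrix_inv_mult_sym_nth:
  fixes G :: "real^'n::finite^'n"
  assumes "invertible G" "\<And>i j. G $ i $ j = G $ j $ i"
  shows "(\<Sum>k\<in>UNIV. G $ k $ i * matrix_inv G $ k $ j) = (if i = j then 1 else 0)"
  using matrix_inv_mult_right_nth[OF assms(1), of i j] by (simp add: assms(2)[of _ i])

lemma sum_matrix_inv_mult_sym:
  fixes G :: "real^'n::finite^'n"
  assumes "invertible G" "\<And>i j. G $ i $ j = G $ j $ i"
  shows "(\<Sum>i\<in>UNIV. \<Sum>j\<in>UNIV. matrix_inv G $ i $ j * G $ i $ j) = real CARD('n)"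
  using matrix_inv_mult_left_nth[OF assms(1)] by (simp add: assms(2)[of _ "i" for i])

lemma sum_raise_index_lower:
  fixes G :: "real^'n::finite^'n"
  assumes "invertible G" "\<And>i j. G $ i $ j = G $ j $ i"
  shows "(\<Sum>i\<in>UNIV. (\<Sum>j\<in>UNIV. matrix_inv G $ i $ j * a j) * G $ i $ k) = a k"
proof -
  have "(\<Sum>i\<in>UNIV. (\<Sum>j\<in>UNIV. matrix_inv G $ i $ j * a j) * G $ i $ k)
      = (\<Sum>j\<in>UNIV. (\<Sum>i\<in>UNIV. G $ i $ k * matrix_inv G $ i $ j) * a j)"
    unfolding sum_distrib_right by (subst sum.swap) (simp add: mult_ac)
  then show ?thesis
    by (simp add: matrix_inv_mult_sym_nth[OF assms] if_zero_mult)
qed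

lemma matrix_inv_cramer:
  fixes M :: "real^'n::finite^'n"
  assumes "invertible M"
  shows "matrix_inv M $ a $ b =
     det (\<chi> i j. if j = a then (if i = b then 1 else 0) else M $ i $ j) / det M"
proof -
  define x where "x = (\<chi> k. matrix_inv M $ k $ b)"
  have "M *v x = (M ** matrix_inv M) *v axis b 1"
    by (simp add: x_def matrix_vector_mult_def matrix_matrix_mult_def axis_def vec_eq_iff
        if_distrib cong: if_cong)
  then have "M *v x = axis b 1"
    by (simp add: matrix_inv_right[OF assms])
  then have "x = (\<chi> k. det (\<chi> i j. if j = k then (axis b 1 :: real^'n) $ i else M $ i $ j) / det M)"
    using cramer assms invertible_det_nz by blast
  then have "x $ a = det (\<chi> i j. if j = a then (axis b 1 :: real^'n) $ i else M $ i $ j) / det M"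
    by simp
  moreover have "(axis b 1 :: real^'n) $ i = (if i = b then 1 else 0)" for i
    by (simp add: axis_def)
  ultimately show ?thesis
    by (simp only: x_def vec_lambda_beta)
qed

lemma differentiable_prod:
  fixes f :: "'i \<Rightarrow> 'a::real_normed_vector \<Rightarrow> real"
  assumes "\<And>i. i \<in> I \<Longrightarrow> f i differentiable (at x)"
  shows "(\<lambda>x. \<Prod>i\<in>I. f i x) differentiable (at x)"
proof -
  from assms obtain f' where "\<And>i. i \<in> I \<Longrightarrow> (f i has_derivative f' i) (at x)"
    unfolding differentiable_def by metis
  then show ?thesis unfolding differentiable_def by (blast intro: has_derivative_prod)
qed

lemma differentiable_det:
  fixes F :: "'a::real_normed_vector \<Rightarrow> real^'n::finite^'n"
  assumes "\<And>i j. (\<lambda>y. F y $ i $ j) differentiable (at x)"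
  shows "(\<lambda>y. det (F y)) differentiable (at x)"
  unfolding det_def
  by (intro differentiable_sum finite_permutations[OF finite_class.finite_UNIV] ballI differentiable_mult
      differentiable_const differentiable_prod assms)

lemma matrix_inv_differentiable:
  fixes F :: "real^'k::finite \<Rightarrow> real^'n::finite^'n"
  assumes U: "open U" "x \<in> U" and inv: "\<And>y. y \<in> U \<Longrightarrow> invertible (F y)"
    and d: "\<And>i j. (\<lambda>y. F y $ i $ j) differentiable (at x)"
  shows "(\<lambda>y. matrix_inv (F y) $ a $ b) differentiable (at x)"
proof -
  let ?C = "\<lambda>y. det (\<chi> i j. if j = a then (if i = b then 1 else 0) else F y $ i $ j) / det (F y)"
  have "?C differentiable (at x)"
  proof (intro differentiable_divide differentiable_det)
    show "(\<lambda>y. (\<chi> i j. if j = a then (if i = b then 1 else 0) else F y $ i $ j) $ i $ j)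
        differentiable (at x)"
      for i j
      using d by (cases "j = a") auto
    show "det (F x) \<noteq> 0" using inv[OF U(2)] invertible_det_nz by blast
  qed (rule d)
  then obtain C' where C: "(?C has_derivative C') (at x)" by (auto simp: differentiable_def)
  have "((\<lambda>y. matrix_inv (F y) $ a $ b) has_derivative C') (at x)"
    by (rule has_derivative_transform_within_open[OF C U]) (simp add: matrix_inv_cramer inv)
  then show ?thesis by (auto simp: differentiable_def)
qed

lemma sym_mat_nth: "sym_mat M \<Longrightarrow> M $ i $ j = M $ j $ i"
  unfolding sym_mat_def by (metis transpose_def vec_lambda_beta)

lemma pos_def_mat_invertible:
  fixes G :: "real^'n::finite^'n"
  assumes "pos_def_mat G"
  shows "invertible G"
proof -
  have "\<forall>x. G *v x = 0 \<longrightarrow> x = 0"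
    using assms unfolding pos_def_mat_def by (metis inner_zero_right less_irrefl)
  then show ?thesis
    using matrix_left_invertible_ker invertible_left_inverse by blast
qed

lemma invertible_if_congruent_to_sign_diagonal:
  fixes G P :: "real^'n::finite^'n"
  assumes "invertible P"
    and "transpose P ** G ** P = (\<chi> a b. if a = b then (if a = i0 then -1 else 1) else 0)"
  shows "invertible G"
proof -
  let ?D = "(\<chi> a b. if a = b then (if a = i0 then -1 else 1) else 0) :: real^'n^'n"
  have "det ?D = (\<Prod>i\<in>UNIV. ?D $ i $ i)" by (rule det_diagonal) simp
  also have "\<dots> \<noteq> 0" by (simp add: prod_zero_iff)
  finally have "det (transpose P ** G ** P) \<noteq> 0" using assms(2) by simp
  then have "det G \<noteq> 0" by (metis det_mul mult_zero_left mult_zero_right)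
  then show ?thesis using invertible_det_nz by blast
qed

lemma pos_def_mat_form_nonneg:
  fixes G :: "real^'n::finite^'n"
  assumes "pos_def_mat G"
  shows "0 \<le> (\<Sum>i\<in>UNIV. \<Sum>j\<in>UNIV. u i * G $ i $ j * u j)"
proof -
  define v :: "real^'n" where "v = (\<chi> i. u i)"
  have "v \<bullet> (G *v v) = (\<Sum>i\<in>UNIV. \<Sum>j\<in>UNIV. u i * G $ i $ j * u j)"
    by (simp add: v_def inner_vec_def matrix_vector_mult_def sum_distrib_left mult_ac)
  moreover have "v = 0 \<Longrightarrow> u = (\<lambda>_. 0)"
    by (simp add: v_def vec_eq_iff fun_eq_iff)
  ultimately show ?thesis
    using assms unfolding pos_def_mat_def by (cases "v = 0") (auto intro: less_imp_le)
qed

lemma quadratic_form_Cauchy_Schwarz: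
  fixes G :: "'n::finite \<Rightarrow> 'n \<Rightarrow> real" and v w :: "'n \<Rightarrow> real"
  assumes sym: "\<And>i j. G i j = G j i"
    and psd: "\<And>u. 0 \<le> (\<Sum>i\<in>UNIV. \<Sum>j\<in>UNIV. u i * G i j * u j)"
  shows "(\<Sum>i\<in>UNIV. \<Sum>j\<in>UNIV. v i * G i j * w j)\<^sup>2
     \<le> (\<Sum>i\<in>UNIV. \<Sum>j\<in>UNIV. v i * G i j * v j) * (\<Sum>i\<in>UNIV. \<Sum>j\<in>UNIV. w i * G i j * w j)"
proof -
  define B where "B u u' = (\<Sum>i\<in>UNIV. \<Sum>j\<in>UNIV. u i * G i j * u' j)" for u u'
  have B_sym: "B w v = B v w"
    unfolding B_def by (subst sum.swap) (simp add: sym mult_ac)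
  have quad: "0 \<le> B v v - 2 * t * B v w + t\<^sup>2 * B w w" for t
  proof -
    have "B (\<lambda>i. v i - t * w i) (\<lambda>i. v i - t * w i) = B v v - t * B w v - t * B v w + t\<^sup>2 * B w w"
      unfolding B_def
      by (simp add: algebra_simps power2_eq_square sum.distrib sum_subtractf sum_distrib_left)
    then show ?thesis using psd[of "\<lambda>i. v i - t * w i"] B_sym by (simp add: B_def)
  qed
  have "(B v w)\<^sup>2 \<le> B v v * B w w"
  proof (cases "B w w = 0")
    case True
    have "B v w = 0"
    proof (rule ccontr)
      assume ne: "B v w \<noteq> 0"
      have "0 \<le> B v v - 2 * ((B v v + 1) / (2 * B v w)) * B v w"
        using quad[of "(B v v + 1) / (2 * B v w)"] True by simp
      also have "\<dots> = -1" using ne by (simp add: field_simps)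
      finally show False by simp
    qed
    then show ?thesis using True by simp
  next
    case False
    then have pos: "B w w > 0" using psd[of w] by (simp add: B_def)
    have "0 \<le> B v v - 2 * (B v w / B w w) * B v w + (B v w / B w w)\<^sup>2 * B w w" by (rule quad)
    also have "\<dots> = B v v - (B v w)\<^sup>2 / B w w" using pos by (simp add: field_simps power2_eq_square)
    finally show ?thesis using pos by (simp add: pos_divide_le_eq)
  qed
  then show ?thesis by (simp add: B_def)
qed

lemma psd_form_add: "psd_form P \<Longrightarrow> psd_form Q \<Longrightarrow> psd_form (\<lambda>i j. P i j + Q i j)"
  unfolding psd_form_def by (simp add: algebra_simps sum.distrib add_nonneg_nonneg)

lemma psd_form_cmult: "c \<ge> 0 \<Longrightarrow> psd_form P \<Longrightarrow> psd_form (\<lambda>i j. c * P i j)"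
proof (unfold psd_form_def, intro allI)
  fix v :: "real^'a"
  assume "c \<ge> 0" "\<forall>v::real^'a. 0 \<le> (\<Sum>a\<in>UNIV. \<Sum>b\<in>UNIV. v $ a * P a b * v $ b)"
  then have "0 \<le> c * (\<Sum>a\<in>UNIV. \<Sum>b\<in>UNIV. v $ a * P a b * v $ b)" by simp
  then show "0 \<le> (\<Sum>a\<in>UNIV. \<Sum>b\<in>UNIV. v $ a * (c * P a b) * v $ b)"
    by (simp add: sum_distrib_left mult_ac)
qed

lemma psd_form_metric_minus_covector_square:
  fixes G :: "real^'n::finite^'n" and a :: "'n \<Rightarrow> real"
  assumes sym: "sym_mat G" and pd: "pos_def_mat G"
    and bound: "(\<Sum>i\<in>UNIV. \<Sum>j\<in>UNIV. matrix_inv G $ i $ j * a i * a j) \<le> s"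
  shows "psd_form (\<lambda>i j. s * G $ i $ j - a i * a j)"
  unfolding psd_form_def
proof
  fix v :: "real^'n"
  define h where "h i = (\<Sum>j\<in>UNIV. matrix_inv G $ i $ j * a j)" for i
  have Gsym: "G $ i $ j = G $ j $ i" for i j using sym_mat_nth[OF sym] .
  have lower: "(\<Sum>i\<in>UNIV. h i * G $ i $ k) = a k" for k
    unfolding h_def by (rule sum_raise_index_lower[OF pos_def_mat_invertible[OF pd] Gsym])
  have va: "(\<Sum>i\<in>UNIV. v $ i * a i) = (\<Sum>i\<in>UNIV. \<Sum>j\<in>UNIV. v $ i * G $ i $ j * h j)"
    by (simp add: lower[symmetric] sum_distrib_left Gsym mult_ac)
  have hh: "(\<Sum>i\<in>UNIV. \<Sum>j\<in>UNIV. h i * G $ i $ j * h j)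
      = (\<Sum>i\<in>UNIV. \<Sum>j\<in>UNIV. matrix_inv G $ i $ j * a i * a j)"
  proof -
    have "(\<Sum>i\<in>UNIV. \<Sum>j\<in>UNIV. h i * G $ i $ j * h j) = (\<Sum>j\<in>UNIV. a j * h j)"
      by (subst sum.swap) (simp add: sum_distrib_right[symmetric] lower)
    then show ?thesis by (simp add: h_def sum_distrib_left mult_ac)
  qed
  let ?vGv = "\<Sum>i\<in>UNIV. \<Sum>j\<in>UNIV. v $ i * G $ i $ j * v $ j"
  have "(\<Sum>i\<in>UNIV. v $ i * a i)\<^sup>2 \<le> ?vGv * (\<Sum>i\<in>UNIV. \<Sum>j\<in>UNIV. h i * G $ i $ j * h j)"
    unfolding va
    by (rule quadratic_form_Cauchy_Schwarz[of "\<lambda>i j. G $ i $ j"])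
       (auto simp: Gsym intro: pos_def_mat_form_nonneg[OF pd])
  also have "\<dots> \<le> ?vGv * s"
    unfolding hh using bound pos_def_mat_form_nonneg[OF pd] by (rule mult_left_mono)
  finally have "(\<Sum>i\<in>UNIV. v $ i * a i)\<^sup>2 \<le> s * ?vGv" by (simp add: mult.commute)
  moreover have "(\<Sum>i\<in>UNIV. v $ i * a i)\<^sup>2 = (\<Sum>i\<in>UNIV. \<Sum>j\<in>UNIV. v $ i * (a i * a j) * v $ j)"
    unfolding power2_eq_square sum_product by (simp add: mult_ac)
  ultimately show "0 \<le> (\<Sum>i\<in>UNIV. \<Sum>j\<in>UNIV. v $ i * (s * G $ i $ j - a i * a j) * v $ j)"
    by (simp add: algebra_simps sum_subtractf sum_distrib_left)
qed

section \<open>Coordinates on the product and the warped metric\<close>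

definition join :: "real^'d::finite \<Rightarrow> real^'n::finite \<Rightarrow> real^('d + 'n)" where
  "join y x = (\<chi> M. case M of Inl i \<Rightarrow> y $ i | Inr j \<Rightarrow> x $ j)"

lemma ypart_join[simp]: "ypart (join y x) = y" by (simp add: ypart_def join_def vec_eq_iff)
lemma xpart_join[simp]: "xpart (join y x) = x" by (simp add: xpart_def join_def vec_eq_iff)

lemma add_axis_Inr: "z + t *\<^sub>R axis (Inr m) 1 = join (ypart z) (xpart z + t *\<^sub>R axis m 1)"
  by (auto simp: vec_eq_iff axis_def join_def ypart_def xpart_def split: sum.split)

lemma add_axis_Inl: "z + t *\<^sub>R axis (Inl m) 1 = join (ypart z + t *\<^sub>R axis m 1) (xpart z)"
  by (auto simp: vec_eq_iff axis_def join_def ypart_def xpart_def split: sum.split)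

lemma pd_Inr: "pd (Inr m) F z = pd m (\<lambda>x. F (join (ypart z) x)) (xpart z)"
  by (simp add: pd_def add_axis_Inr)
lemma pd_Inl: "pd (Inl m) F z = pd m (\<lambda>y. F (join y (xpart z))) (ypart z)"
  by (simp add: pd_def add_axis_Inl)

lemma sum_UNIV_Plus:
  "(\<Sum>a\<in>(UNIV::('a::finite + 'b::finite) set). f a) = (\<Sum>i\<in>UNIV. f (Inl i)) + (\<Sum>j\<in>UNIV. f (Inr j))"
  using sum.Plus[of "UNIV::'a set" "UNIV::'b set" f] by (simp add: o_def)

lemma open_prod_dom:
  assumes "open U" "open V"
  shows "open (prod_dom U V :: (real^('d::finite + 'n::finite)) set)"
proof -
  have "prod_dom U V = (ypart -` U) \<inter> (xpart -` V)" by (auto simp: prod_dom_def)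
  moreover have "continuous_on UNIV ypart" "continuous_on UNIV xpart"
    unfolding ypart_def xpart_def by (intro continuous_intros)+
  ultimately show ?thesis
    using assms by (auto intro!: open_Int open_vimage)
qed

lemma join_in_prod_dom[simp]: "join y x \<in> prod_dom U V \<longleftrightarrow> y \<in> U \<and> x \<in> V"
  by (simp add: prod_dom_def)

definition block_diag ::
    "real^'d::finite^'d \<Rightarrow> real^'n::finite^'n \<Rightarrow> ('d + 'n) \<Rightarrow> ('d + 'n) \<Rightarrow> real" where
  "block_diag P Q M N
    = (case (M, N) of (Inl i, Inl j) \<Rightarrow> P $ i $ j | (Inr i, Inr j) \<Rightarrow> Q $ i $ j | _ \<Rightarrow> 0)"

lemma block_diag_simps[simp]:
  "block_diag P Q (Inl i) (Inl j) = P $ i $ j" "block_diag P Q (Inr k) (Inr l) = Q $ k $ l"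
  "block_diag P Q (Inl i) (Inr l) = 0" "block_diag P Q (Inr k) (Inl j) = 0"
  by (simp_all add: block_diag_def)

lemma warped_metric_block_diag:
  "warped_metric gd gb A z $ M $ N = exp (2 * A (xpart z))
    * block_diag (gd (ypart z)) (gb (xpart z)) M N"
  by (simp add: warped_metric_def block_diag_def split: sum.split)

lemma block_diag_mult:
  "(\<Sum>K\<in>UNIV. block_diag P Q M K * block_diag P' Q' K N) = block_diag (P ** P') (Q ** Q') M N"
  by (cases M; cases N) (simp_all add: sum_UNIV_Plus matrix_matrix_mult_def)

lemma block_diag_mat_1: "(\<chi> M N. block_diag (mat 1) (mat 1) M N) = mat 1"
  by (auto simp: vec_eq_iff mat_def block_diag_def split: sum.split)

lemma scaled_block_diag_mult:
  "(\<chi> M N. c * block_diag P Q M N) ** (\<chi> M N. c' * block_diag P' Q' M N)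
     = (\<chi> M N. (c * c') * block_diag (P ** P') (Q ** Q') M N)"
  unfolding matrix_matrix_mult_def[of "\<chi> M N. c * block_diag P Q M N"]
  by (simp add: vec_eq_iff block_diag_mult[symmetric] sum_distrib_left mult_ac)

lemma matrix_inv_scaled_block_diag:
  fixes P :: "real^'d::finite^'d" and Q :: "real^'n::finite^'n"
  assumes "invertible P" "invertible Q" "c \<noteq> 0"
  shows "matrix_inv (\<chi> M N. c * block_diag P Q M N)
     = (\<chi> M N. inverse c * block_diag (matrix_inv P) (matrix_inv Q) M N)"
  by (rule matrix_inv_unique)
     (use assms in \<open>simp_all add: scaled_block_diag_mult matrix_inv_right matrix_inv_left
        block_diag_mat_1\<close>)

lemma matrix_inv_warped_metric:
  assumes "invertible (gd (ypart z))" "invertible (gb (xpart z))"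
  shows "matrix_inv (warped_metric gd gb A z) $ M $ N =
     exp (- 2 * A (xpart z)) * block_diag (matrix_inv (gd (ypart z))) (matrix_inv (gb (xpart z))) M N"
proof -
  have "warped_metric gd gb A z
    = (\<chi> M N. exp (2 * A (xpart z)) * block_diag (gd (ypart z)) (gb (xpart z)) M N)"
    by (simp add: vec_eq_iff warped_metric_block_diag)
  then show ?thesis
    using assms by (simp add: matrix_inv_scaled_block_diag exp_minus[symmetric])
qed

section \<open>Christoffel symbols of the warped metric\<close>

definition warp_grad :: "(real^'n::finite \<Rightarrow> real) \<Rightarrow> real^'n \<Rightarrow> ('d::finite + 'n) \<Rightarrow> real" where
  "warp_grad A x B = (case B of Inl _ \<Rightarrow> 0 | Inr k \<Rightarrow> pd k A x)"

definition product_metric_pd :: "(real^'d::finite \<Rightarrow> real^'d^'d) \<Rightarrow> (real^'n::finite \<Rightarrow> real^'n^'n)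
    \<Rightarrow> real^'d \<Rightarrow> real^'n \<Rightarrow> ('d + 'n) \<Rightarrow> ('d + 'n) \<Rightarrow> ('d + 'n) \<Rightarrow> real" where
  "product_metric_pd gd gb y x B E C = (case B of
      Inl r \<Rightarrow> block_diag (\<chi> i j. pd r (\<lambda>y. gd y $ i $ j) y) 0 E C
    | Inr k \<Rightarrow> block_diag 0 (\<chi> i j. pd k (\<lambda>x. gb x $ i $ j) x) E C)"

lemma warp_grad_simps[simp]: "warp_grad A x (Inl i) = 0" "warp_grad A x (Inr k) = pd k A x"
  by (simp_all add: warp_grad_def)

lemma exp_double_derivative:
  fixes A :: "real^'n::finite \<Rightarrow> real"
  assumes "A differentiable (at x)"
  shows differentiable_exp_double: "(\<lambda>x. exp (2 * A x)) differentiable (at x)"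
    and pd_exp_double: "pd k (\<lambda>x. exp (2 * A x)) x = exp (2 * A x) * (2 * pd k A x)"
proof -
  obtain A' where A: "(A has_derivative A') (at x)" using assms by (auto simp: differentiable_def)
  have "((\<lambda>x. exp (2 * A x)) has_derivative (\<lambda>v. exp (2 * A x) * (2 * A' v))) (at x)"
    using A by (auto intro!: derivative_eq_intros simp: algebra_simps)
  then show "(\<lambda>x. exp (2 * A x)) differentiable (at x)"
    and "pd k (\<lambda>x. exp (2 * A x)) x = exp (2 * A x) * (2 * pd k A x)"
    using pd_eq_has_derivative[OF A] by (auto simp: differentiable_def pd_eq_has_derivative)
qed

lemma pd_warped_metric:
  fixes gd :: "real^'d::finite \<Rightarrow> real^'d^'d" and gb :: "real^'n::finite \<Rightarrow> real^'n^'n"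
  assumes dgd: "\<And>i j. (\<lambda>y. gd y $ i $ j) differentiable (at (ypart z))"
    and dgb: "\<And>i j. (\<lambda>x. gb x $ i $ j) differentiable (at (xpart z))"
    and dA: "A differentiable (at (xpart z))"
  shows "pd B (\<lambda>z. warped_metric gd gb A z $ E $ C) z =
     exp (2 * A (xpart z))
       * (2 * warp_grad A (xpart z) B * block_diag (gd (ypart z)) (gb (xpart z)) E C
        + product_metric_pd gd gb (ypart z) (xpart z) B E C)"
proof (cases B)
  case (Inl r)
  have "pd B (\<lambda>z. warped_metric gd gb A z $ E $ C) z =
        pd r (\<lambda>y. exp (2 * A (xpart z)) * block_diag (gd y) (gb (xpart z)) E C) (ypart z)"
    by (simp add: Inl pd_Inl warped_metric_block_diag)
  also have "\<dots> = exp (2 * A (xpart z)) * product_metric_pd gd gb (ypart z) (xpart z) B E C"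
  proof (cases E; cases C)
    fix i j assume "E = Inl i" "C = Inl j"
    then show ?thesis using Inl by (simp add: product_metric_pd_def pd_cmult dgd)
  qed (simp_all add: Inl product_metric_pd_def)
  finally show ?thesis using Inl by simp
next
  case (Inr k)
  have "pd B (\<lambda>z. warped_metric gd gb A z $ E $ C) z =
        pd k (\<lambda>x. exp (2 * A x) * block_diag (gd (ypart z)) (gb x) E C) (xpart z)"
    by (simp add: Inr pd_Inr warped_metric_block_diag)
  also have "\<dots> = exp (2 * A (xpart z))
    * (2 * warp_grad A (xpart z) B * block_diag (gd (ypart z)) (gb (xpart z)) E C
        + product_metric_pd gd gb (ypart z) (xpart z) B E C)"
  proof (cases E; cases C)
    fix i j assume "E = Inr i" "C = Inr j"
    then show ?thesis
      using Inr dA differentiable_exp_double[OF dA]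
      by (simp add: product_metric_pd_def pd_mult dgb pd_exp_double) (simp add: algebra_simps)
  qed (use Inr dA differentiable_exp_double[OF dA] in
        \<open>simp_all add: product_metric_pd_def pd_multc pd_exp_double\<close>)
  finally show ?thesis .
qed

lemma christoffel_warped_metric_expand:
  fixes gd :: "real^'d::finite \<Rightarrow> real^'d^'d" and gb :: "real^'n::finite \<Rightarrow> real^'n^'n"
  assumes dgd: "\<And>i j. (\<lambda>y. gd y $ i $ j) differentiable (at (ypart z))"
    and dgb: "\<And>i j. (\<lambda>x. gb x $ i $ j) differentiable (at (xpart z))"
    and dA: "A differentiable (at (xpart z))"
    and id: "invertible (gd (ypart z))" and ib: "invertible (gb (xpart z))"
  shows "christoffel (warped_metric gd gb A) a b c z =
    (\<Sum>E\<in>UNIV. block_diag (matrix_inv (gd (ypart z))) (matrix_inv (gb (xpart z))) a E *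
       ((2 * warp_grad A (xpart z) b * block_diag (gd (ypart z)) (gb (xpart z)) E c
         + product_metric_pd gd gb (ypart z) (xpart z) b E c)
      + (2 * warp_grad A (xpart z) c * block_diag (gd (ypart z)) (gb (xpart z)) E b
        + product_metric_pd gd gb (ypart z) (xpart z) c E b)
      - (2 * warp_grad A (xpart z) E * block_diag (gd (ypart z)) (gb (xpart z)) b c
        + product_metric_pd gd gb (ypart z) (xpart z) E b c))) / 2"
proof -
  have t: "(exp (- 2 * A (xpart z)) * p) * (exp (2 * A (xpart z)) * u + exp (2 * A (xpart z)) * v
      - exp (2 * A (xpart z)) * w) = p * (u + v - w)" for p u v w :: real
    by (simp add: exp_minus field_simps)
  show ?thesis
    unfolding christoffel_def matrix_inv_warped_metric[where gd=gd and gb=gb and z=z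
      and A=A, OF id ib]
      pd_warped_metric[OF dgd dgb dA] t ..
qed

definition raise_grad ::
    "(real^'n::finite \<Rightarrow> real^'n^'n) \<Rightarrow> (real^'n \<Rightarrow> real) \<Rightarrow> 'n \<Rightarrow> real^'n \<Rightarrow> real" where
  "raise_grad G f m x = (\<Sum>e\<in>UNIV. matrix_inv (G x) $ m $ e * pd e f x)"

definition warped_christoffel :: "(real^'d::finite \<Rightarrow> real^'d^'d) \<Rightarrow> (real^'n::finite \<Rightarrow> real^'n^'n) \<Rightarrow> (real^'n \<Rightarrow> real)
   \<Rightarrow> ('d + 'n) \<Rightarrow> ('d + 'n) \<Rightarrow> ('d + 'n) \<Rightarrow> real^'d \<Rightarrow> real^'n \<Rightarrow> real" where
  "warped_christoffel gd gb A a b c y x = (case a of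
     Inl \<alpha> \<Rightarrow> (case b of
         Inl \<beta> \<Rightarrow> (case c of Inl \<gamma> \<Rightarrow> christoffel gd \<alpha> \<beta> \<gamma> y | Inr k \<Rightarrow> (if \<alpha> = \<beta> then pd k A x else 0))
       | Inr k \<Rightarrow> (case c of Inl \<gamma> \<Rightarrow> (if \<alpha> = \<gamma> then pd k A x else 0) | Inr _ \<Rightarrow> 0))
   | Inr m \<Rightarrow> (case b of
         Inl \<beta> \<Rightarrow> (case c of Inl \<gamma> \<Rightarrow> - raise_grad gb A m x * gd y $ \<beta> $ \<gamma> | Inr _ \<Rightarrow> 0)
       | Inr n \<Rightarrow> (case c of Inl _ \<Rightarrow> 0
            | Inr k \<Rightarrow> christoffel gb m n k x + (if m = k then pd n A x else 0)
                 + (if m = n then pd k A x else 0) - raise_grad gb A m x * gb x $ n $ k)))"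

lemma warped_christoffel_simps[simp]:
  "warped_christoffel gd gb A (Inl \<alpha>) (Inl \<beta>) (Inl \<gamma>) y x = christoffel gd \<alpha> \<beta> \<gamma> y"
  "warped_christoffel gd gb A (Inl \<alpha>) (Inl \<beta>) (Inr k) y x = (if \<alpha> = \<beta> then pd k A x else 0)"
  "warped_christoffel gd gb A (Inl \<alpha>) (Inr k) (Inl \<gamma>) y x = (if \<alpha> = \<gamma> then pd k A x else 0)"
  "warped_christoffel gd gb A (Inl \<alpha>) (Inr k) (Inr k') y x = 0"
  "warped_christoffel gd gb A (Inr m) (Inl \<beta>) (Inl \<gamma>) y x = - raise_grad gb A m x * gd y $ \<beta> $ \<gamma>"
  "warped_christoffel gd gb A (Inr m) (Inl \<beta>) (Inr k) y x = 0"
  "warped_christoffel gd gb A (Inr m) (Inr n) (Inl \<gamma>) y x = 0"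
  "warped_christoffel gd gb A (Inr m) (Inr n) (Inr k) y x = christoffel gb m n k x
    + (if m = k then pd n A x else 0)
                 + (if m = n then pd k A x else 0) - raise_grad gb A m x * gb x $ n $ k"
  by (simp_all add: warped_christoffel_def)

lemma sum_half_distrib:
  fixes p g1 g2 c d1 d2 d3 :: "'e \<Rightarrow> real"
  assumes "finite S"
  shows "(\<Sum>e\<in>S. p e * ((2*a*g1 e + d1 e) + (2*b*g2 e + d2 e) - (2*c e*g3 + d3 e)))/2
    = (\<Sum>e\<in>S. p e * (d1 e + d2 e - d3 e))/2 + a * (\<Sum>e\<in>S. p e * g1 e) + b * (\<Sum>e\<in>S. p e*g2 e)
      - (\<Sum>e\<in>S. p e * c e) * g3"
proof -
  have "(\<Sum>e\<in>S. p e * ((2*a*g1 e + d1 e) + (2*b*g2 e + d2 e) - (2*c e*g3 + d3 e)))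
     = (\<Sum>e\<in>S. p e * (d1 e + d2 e - d3 e) + 2 * (a * (p e * g1 e)) + 2 * (b * (p e * g2 e))
        - 2 * ((p e * c e) * g3))"
    by (rule sum.cong) (simp_all add: algebra_simps)
  also have "\<dots> = (\<Sum>e\<in>S. p e * (d1 e + d2 e - d3 e)) + 2 * (a * (\<Sum>e\<in>S. p e * g1 e))
      + 2 * (b * (\<Sum>e\<in>S. p e*g2 e)) - 2 * ((\<Sum>e\<in>S. p e * c e) * g3)"
    by (simp add: sum.distrib sum_subtractf sum_distrib_left sum_distrib_right)
  finally show ?thesis by simp
qed

lemma christoffel_warped_metric:
  fixes gd :: "real^'d::finite \<Rightarrow> real^'d^'d" and gb :: "real^'n::finite \<Rightarrow> real^'n^'n"
  assumes dgd: "\<And>i j. (\<lambda>y. gd y $ i $ j) differentiable (at (ypart z))"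
    and dgb: "\<And>i j. (\<lambda>x. gb x $ i $ j) differentiable (at (xpart z))"
    and dA: "A differentiable (at (xpart z))"
    and id: "invertible (gd (ypart z))" and ib: "invertible (gb (xpart z))"
  shows "christoffel (warped_metric gd gb A) a b c z
    = warped_christoffel gd gb A a b c (ypart z) (xpart z)"
proof -
  note G = christoffel_warped_metric_expand[OF dgd dgb dA id ib]
  let ?y = "ypart z" and ?x = "xpart z"
  have Lc: "(\<Sum>k\<in>UNIV. matrix_inv (gd ?y) $ i $ k * (c * gd ?y $ k $ j)) = (if i = j then c else 0)"
    for i j c
    using matrix_inv_mult_left_nth[OF id, of i j]
    by (simp add: mult.left_commute[of _ c] sum_distrib_left[symmetric])
  show ?thesis
  proof (cases a; cases b; cases c)
    fix m n k assume abc: "a = Inr m" "b = Inr n" "c = Inr k"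
    have "christoffel (warped_metric gd gb A) a b c z =
      (\<Sum>e\<in>UNIV. matrix_inv (gb ?x) $ m $ e *
       ((2 * pd n A ?x * gb ?x $ e $ k + pd n (\<lambda>x. gb x $ e $ k) ?x)
      + (2 * pd k A ?x * gb ?x $ e $ n + pd k (\<lambda>x. gb x $ e $ n) ?x)
      - (2 * pd e A ?x * gb ?x $ n $ k + pd e (\<lambda>x. gb x $ n $ k) ?x))) / 2"
      unfolding G abc by (simp add: sum_UNIV_Plus product_metric_pd_def)
    also have "\<dots> = christoffel gb m n k ?x + pd n A ?x * (if m = k then 1 else 0)
       + pd k A ?x * (if m = n then 1 else 0) - raise_grad gb A m ?x * gb ?x $ n $ k"
      by (subst sum_half_distrib)
        (simp_all add: matrix_inv_mult_left_nth[OF ib] christoffel_def raise_grad_def)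
    finally show ?thesis using abc by simp
  next
    fix m \<beta> \<gamma> assume "a = Inr m" "b = Inl \<beta>" "c = Inl \<gamma>"
    then show ?thesis unfolding G
      by (simp add: sum_UNIV_Plus product_metric_pd_def raise_grad_def)
         (simp add: sum_negf sum_distrib_left sum_distrib_right mult_ac)
  qed (unfold G, auto simp: sum_UNIV_Plus product_metric_pd_def christoffel_def Lc)
qed

section \<open>Ricci tensor of the warped metric\<close>

lemma ricci_christoffel_expansion:
  "ricci G b d z = (\<Sum>a\<in>UNIV. pd a (christoffel G a d b) z) - (\<Sum>a\<in>UNIV. pd d (christoffel G a a b) z)
     + (\<Sum>a\<in>UNIV. \<Sum>e\<in>UNIV. christoffel G a a e z * christoffel G e d b z)
     - (\<Sum>a\<in>UNIV. \<Sum>e\<in>UNIV. christoffel G a d e z * christoffel G e a b z)"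
  unfolding ricci_def riemann_def by (simp add: sum.distrib sum_subtractf)

lemma pd_minus_multc:
  fixes f :: "real^'k::finite \<Rightarrow> real"
  assumes "f differentiable (at x)"
  shows "pd i (\<lambda>x. - (f x * c)) x = - (pd i f x * c)"
  using pd_minus[OF differentiable_mult[OF assms differentiable_const]] pd_multc[OF assms] by simp

lemma sum_trace_mult_swap:
  fixes G :: "'a::finite \<Rightarrow> 'a \<Rightarrow> 'a \<Rightarrow> real"
  shows "(\<Sum>a\<in>UNIV. \<Sum>e\<in>UNIV. G a a e * G e d b) = (\<Sum>e\<in>UNIV. (\<Sum>a\<in>UNIV. G a a e) * G e d b)"
  by (subst sum.swap) (simp add: sum_distrib_right)

lemma sum_conformal_christoffel_product:
  fixes G :: "'n::finite \<Rightarrow> 'n \<Rightarrow> 'n \<Rightarrow> real" and a h :: "'n \<Rightarrow> real" and g :: "'n \<Rightarrow> 'n \<Rightarrow> real"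
  assumes hg: "\<And>k. (\<Sum>m\<in>UNIV. h m * g m k) = a k" and gs: "\<And>i j. g i j = g j i"
  shows "(\<Sum>m\<in>UNIV. \<Sum>j\<in>UNIV.
        (G m k j + (if m = j then a k else 0) + (if m = k then a j else 0) - h m * g k j)
      * (G j m n + (if j = n then a m else 0) + (if j = m then a n else 0) - h j * g m n))
   = (\<Sum>m\<in>UNIV. \<Sum>j\<in>UNIV. G m k j * G j m n) + (\<Sum>m\<in>UNIV. G m k n * a m) + a n * (\<Sum>m\<in>UNIV. G m k m)
     - (\<Sum>m\<in>UNIV. \<Sum>j\<in>UNIV. G m k j * h j * g m n)
     + a k * (\<Sum>m\<in>UNIV. G m m n) + (\<Sum>j\<in>UNIV. a j * G j k n) - (\<Sum>m\<in>UNIV. \<Sum>j\<in>UNIV. h m * g k j * G j m n)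
     + (real CARD('n) + 2) * a k * a n - 2 * (\<Sum>j\<in>UNIV. a j * h j) * g k n"
proof -
  have hg': "(\<Sum>m\<in>UNIV. h m * g k m) = a k" for k using hg[of k] by (simp add: gs)
  have e: "(G m k j + (if m = j then a k else 0) + (if m = k then a j else 0) - h m * g k j)
            * (G j m n + (if j = n then a m else 0) + (if j = m then a n else 0) - h j * g m n)
      = G m k j * G j m n + (if j = n then G m k j * a m else 0)
        + (if j = m then G m k j * a n else 0)
        - G m k j * h j * g m n
        + (if m = j then a k * G j m n else 0) + (if m = k then a j * G j m n else 0) - h m * g k j * G j m n
        + (if m = j then (if j = n then a k * a m else 0) + a k * a n - a k * h j * g m n else 0)
        + (if m = k then (if j = n then a j * a m else 0) + (if j = m then a j * a n else 0)
          - a j * h j * g m n else 0)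
        - (if j = n then h m * g k j * a m else 0) - (if j = m then h m * g k j * a n else 0)
        + h m * g k j * h j * g m n" for m j
    by (simp add: algebra_simps)
  have q1: "(\<Sum>m\<in>UNIV. \<Sum>j\<in>UNIV. h m * g k j * h j * g m n) = a k * a n"
  proof -
    have "(\<Sum>m\<in>UNIV. \<Sum>j\<in>UNIV. h m * g k j * h j * g m n)
      = (\<Sum>m\<in>UNIV. h m * g m n * (\<Sum>j\<in>UNIV. h j * g k j))"
      by (simp add: sum_distrib_left mult_ac)
    also have "\<dots> = (\<Sum>m\<in>UNIV. h m * g m n) * a k" by (simp add: hg' sum_distrib_right)
    also have "\<dots> = a k * a n" by (simp add: hg)
    finally show ?thesis .
  qed
  have q2: "(\<Sum>m\<in>UNIV. h m * g k m * a n) = a k * a n"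
    using hg' by (simp add: sum_distrib_right[symmetric])
  have q3: "(\<Sum>m\<in>UNIV. a k * h m * g m n) = a k * a n"
    using hg by (simp add: sum_distrib_left[symmetric] mult.assoc)
  have q4: "(\<Sum>m\<in>UNIV. h m * g k n * a m) = (\<Sum>j\<in>UNIV. a j * h j) * g k n"
    unfolding sum_distrib_right by (simp add: mult_ac)
  have q5: "(\<Sum>j\<in>UNIV. a j * h j * g k n) = (\<Sum>j\<in>UNIV. a j * h j) * g k n"
    unfolding sum_distrib_right ..
  show ?thesis
    unfolding e
    by (simp add: sum.distrib sum_subtractf sum_if_zero q1 q2 q3 q4 q5)
       (simp add: algebra_simps sum_distrib_left)
qed

definition laplacian :: "(real^'n::finite \<Rightarrow> real^'n^'n) \<Rightarrow> (real^'n \<Rightarrow> real) \<Rightarrow> real^'n \<Rightarrow> real" where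
  "laplacian G f x = (\<Sum>m\<in>UNIV. pd m (raise_grad G f m) x)
     + (\<Sum>k\<in>UNIV. (\<Sum>m\<in>UNIV. christoffel G m m k x) * raise_grad G f k x)"

locale warped_product =
  fixes gd :: "real^'d::finite \<Rightarrow> real^'d^'d"
    and gb :: "real^'n::finite \<Rightarrow> real^'n^'n"
    and A :: "real^'n \<Rightarrow> real"
    and Xd :: "(real^'d) set" and Mn :: "(real^'n) set"
  assumes open_Xd: "open Xd" and open_Mn: "open Mn"
    and gd_smooth: "smooth_metric_on Xd gd"
    and gd_invertible: "\<And>y. y \<in> Xd \<Longrightarrow> invertible (gd y)"
    and gd_sym: "\<And>y i j. y \<in> Xd \<Longrightarrow> gd y $ i $ j = gd y $ j $ i"
    and gb_smooth: "smooth_metric_on Mn gb"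
    and gb_invertible: "\<And>x. x \<in> Mn \<Longrightarrow> invertible (gb x)"
    and gb_sym: "\<And>x i j. x \<in> Mn \<Longrightarrow> gb x $ i $ j = gb x $ j $ i"
    and A_smooth: "coord_smooth_on Mn A"
begin

abbreviation "W \<equiv> warped_metric gd gb A"

lemma gd_differentiable: "y \<in> Xd \<Longrightarrow> (\<lambda>y. gd y $ i $ j) differentiable (at y)"
  using gd_smooth unfolding smooth_metric_on_def coord_smooth_on_def by (metis pds.simps(1))
lemma gb_differentiable: "x \<in> Mn \<Longrightarrow> (\<lambda>x. gb x $ i $ j) differentiable (at x)"
  using gb_smooth unfolding smooth_metric_on_def coord_smooth_on_def by (metis pds.simps(1))
lemma pd_gb_differentiable: "x \<in> Mn \<Longrightarrow> pd k (\<lambda>x. gb x $ i $ j) differentiable (at x)"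
  using gb_smooth unfolding smooth_metric_on_def coord_smooth_on_def by (metis pds.simps)
lemma A_differentiable: "x \<in> Mn \<Longrightarrow> A differentiable (at x)"
  using A_smooth unfolding coord_smooth_on_def by (metis pds.simps(1))
lemma pd_A_differentiable: "x \<in> Mn \<Longrightarrow> pd k A differentiable (at x)"
  using A_smooth unfolding coord_smooth_on_def by (metis pds.simps)
lemma matrix_inv_gb_differentiable: "x \<in> Mn \<Longrightarrow> (\<lambda>x. matrix_inv (gb x) $ i $ j) differentiable (at x)"
  by (rule matrix_inv_differentiable[OF open_Mn _ gb_invertible gb_differentiable])

lemma christoffel_gb_differentiable: "x \<in> Mn \<Longrightarrow> christoffel gb m n k differentiable (at x)"
  unfolding christoffel_def[abs_def]
  by (intro differentiable_divide differentiable_sum ballI differentiable_mult differentiable_add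
      differentiable_diff matrix_inv_gb_differentiable pd_gb_differentiable differentiable_const finite) auto

lemma raise_grad_differentiable: "x \<in> Mn \<Longrightarrow> raise_grad gb A m differentiable (at x)"
  unfolding raise_grad_def[abs_def]
  by (intro differentiable_sum ballI differentiable_mult matrix_inv_gb_differentiable pd_A_differentiable finite)

lemma pd_pd_A_commute: "x \<in> Mn \<Longrightarrow> pd j (pd i A) x = pd i (pd j A) x"
  by (rule pd_commute[OF open_Mn _ A_differentiable pd_A_differentiable pd_A_differentiable])

lemmas pd_rules = pd_add pd_diff pd_mult pd_if_zero
lemmas differentiable_rules = differentiable_add differentiable_diff differentiable_mult
  differentiable_if_zero christoffel_gb_differentiable pd_A_differentiable raise_grad_differentiable
  gb_differentiable

lemma christoffel_W: "z \<in> prod_dom Xd Mn \<Longrightarrow> christoffel W a b c z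
  = warped_christoffel gd gb A a b c (ypart z) (xpart z)"
  by (rule christoffel_warped_metric)
    (auto simp: prod_dom_def gd_differentiable gb_differentiable A_differentiable gd_invertible gb_invertible)

lemma pd_christoffel_W: "z \<in> prod_dom Xd Mn \<Longrightarrow>
   pd B (christoffel W a b c) z = pd B (\<lambda>z. warped_christoffel gd gb A a b c (ypart z) (xpart z)) z"
  by (rule pd_cong_open[OF open_prod_dom[OF open_Xd open_Mn]]) (auto simp: christoffel_W)

lemma pd_Inl_christoffel_W:
  assumes "z \<in> prod_dom Xd Mn"
  shows "pd (Inl r) (christoffel W a b c) z
    = pd r (\<lambda>y. warped_christoffel gd gb A a b c y (xpart z)) (ypart z)"
  using pd_christoffel_W[OF assms, of "Inl r"] by (simp add: pd_Inl)

lemma pd_Inr_christoffel_W: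
  assumes "z \<in> prod_dom Xd Mn"
  shows "pd (Inr k) (christoffel W a b c) z
    = pd k (\<lambda>x. warped_christoffel gd gb A a b c (ypart z) x) (xpart z)"
  using pd_christoffel_W[OF assms, of "Inr k"] by (simp add: pd_Inr)

lemma raise_grad_lower:
  "x \<in> Mn \<Longrightarrow> (\<Sum>m\<in>UNIV. raise_grad gb A m x * gb x $ m $ k) = pd k A x"
  unfolding raise_grad_def by (rule sum_raise_index_lower[OF gb_invertible gb_sym])

lemma div_christoffel_W_Inl:
  assumes z: "z \<in> prod_dom Xd Mn"
  shows "(\<Sum>a\<in>UNIV. pd a (christoffel W a (Inl \<delta>) (Inl \<beta>)) z)
     = (\<Sum>\<alpha>\<in>UNIV. pd \<alpha> (christoffel gd \<alpha> \<delta> \<beta>) (ypart z))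
       - gd (ypart z) $ \<delta> $ \<beta> * (\<Sum>m\<in>UNIV. pd m (raise_grad gb A m) (xpart z))"
proof -
  have x: "xpart z \<in> Mn" using z by (simp add: prod_dom_def)
  show ?thesis
    by (simp add: sum_UNIV_Plus pd_Inl_christoffel_W[OF z] pd_Inr_christoffel_W[OF z] pd_minus_multc raise_grad_differentiable[OF x]
        sum_negf sum_distrib_left mult.commute)
qed

lemma pd_trace_christoffel_W_Inl:
  assumes z: "z \<in> prod_dom Xd Mn"
  shows "(\<Sum>a\<in>UNIV. pd (Inl \<delta>) (christoffel W a a (Inl \<beta>)) z)
     = (\<Sum>\<alpha>\<in>UNIV. pd \<delta> (christoffel gd \<alpha> \<alpha> \<beta>) (ypart z))"
  by (simp add: sum_UNIV_Plus pd_Inl_christoffel_W[OF z])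

lemma trace_christoffel_W_Inl:
  assumes z: "z \<in> prod_dom Xd Mn"
  shows "(\<Sum>a\<in>UNIV. christoffel W a a (Inl \<epsilon>) z) = (\<Sum>\<alpha>\<in>UNIV. christoffel gd \<alpha> \<alpha> \<epsilon> (ypart z))"
  by (simp add: sum_UNIV_Plus christoffel_W[OF z])

lemma trace_christoffel_W_Inr:
  assumes z: "z \<in> prod_dom Xd Mn"
  shows "(\<Sum>a\<in>UNIV. christoffel W a a (Inr k) z) =
     (\<Sum>m\<in>UNIV. christoffel gb m m k (xpart z)) + (real CARD('d) + real CARD('n)) * pd k A (xpart z)"
proof -
  have x: "xpart z \<in> Mn" using z by (simp add: prod_dom_def)
  have "(\<Sum>a\<in>UNIV. christoffel W a a (Inr k) z) =
     real CARD('d) * pd k A (xpart z) + ((\<Sum>m\<in>UNIV. christoffel gb m m k (xpart z)) + pd k A (xpart z)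
       + real CARD('n) * pd k A (xpart z)
         - (\<Sum>m\<in>UNIV. raise_grad gb A m (xpart z) * gb (xpart z) $ m $ k))"
    by (simp add: sum_UNIV_Plus christoffel_W[OF z] sum.distrib sum_subtractf)
  also have "\<dots> = (\<Sum>m\<in>UNIV. christoffel gb m m k (xpart z)) + (real CARD('d) + real CARD('n))
    * pd k A (xpart z)"
    by (simp add: raise_grad_lower[OF x] algebra_simps)
  finally show ?thesis .
qed

lemma trace_christoffel_W_contract_Inl:
  assumes z: "z \<in> prod_dom Xd Mn"
  shows "(\<Sum>a\<in>UNIV. \<Sum>e\<in>UNIV. christoffel W a a e z * christoffel W e (Inl \<delta>) (Inl \<beta>) z)
     = (\<Sum>\<epsilon>\<in>UNIV. (\<Sum>\<alpha>\<in>UNIV. christoffel gd \<alpha> \<alpha> \<epsilon> (ypart z)) * christoffel gd \<epsilon> \<delta> \<beta> (ypart z))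
       - gd (ypart z) $ \<delta> $ \<beta>
         * ((\<Sum>k\<in>UNIV. (\<Sum>m\<in>UNIV. christoffel gb m m k (xpart z)) * raise_grad gb A k (xpart z))
           + (real CARD('d) + real CARD('n))
             * (\<Sum>k\<in>UNIV. pd k A (xpart z) * raise_grad gb A k (xpart z)))"
proof -
  have "(\<Sum>a\<in>UNIV. \<Sum>e\<in>UNIV. christoffel W a a e z * christoffel W e (Inl \<delta>) (Inl \<beta>) z)
      = (\<Sum>e\<in>UNIV. (\<Sum>a\<in>UNIV. christoffel W a a e z) * christoffel W e (Inl \<delta>) (Inl \<beta>) z)"
    by (rule sum_trace_mult_swap)
  also have "\<dots>
    = (\<Sum>\<epsilon>\<in>UNIV. (\<Sum>a\<in>UNIV. christoffel W a a (Inl \<epsilon>) z) * christoffel W (Inl \<epsilon>) (Inl \<delta>) (Inl \<beta>) z)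
     + (\<Sum>k\<in>UNIV. (\<Sum>a\<in>UNIV. christoffel W a a (Inr k) z) * christoffel W (Inr k) (Inl \<delta>) (Inl \<beta>) z)"
    by (rule sum_UNIV_Plus)
  also have "\<dots> = (\<Sum>\<epsilon>\<in>UNIV. (\<Sum>\<alpha>\<in>UNIV. christoffel gd \<alpha> \<alpha> \<epsilon> (ypart z)) * christoffel gd \<epsilon> \<delta> \<beta> (ypart z))
     + (\<Sum>k\<in>UNIV. ((\<Sum>m\<in>UNIV. christoffel gb m m k (xpart z)) + (real CARD('d) + real CARD('n))
       * pd k A (xpart z))
          * (- raise_grad gb A k (xpart z) * gd (ypart z) $ \<delta> $ \<beta>))"
    unfolding trace_christoffel_W_Inl[OF z] trace_christoffel_W_Inr[OF z]
      by (simp only: christoffel_W[OF z] warped_christoffel_simps)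
  finally show ?thesis
    by (simp add: algebra_simps sum.distrib sum_subtractf sum_distrib_left sum_negf)
qed

lemma christoffel_W_square_Inl:
  assumes z: "z \<in> prod_dom Xd Mn"
  shows "(\<Sum>a\<in>UNIV. \<Sum>e\<in>UNIV. christoffel W a (Inl \<delta>) e z * christoffel W e a (Inl \<beta>) z)
     = (\<Sum>\<alpha>\<in>UNIV. \<Sum>\<epsilon>\<in>UNIV. christoffel gd \<alpha> \<delta> \<epsilon> (ypart z) * christoffel gd \<epsilon> \<alpha> \<beta> (ypart z))
       - 2 * gd (ypart z) $ \<delta> $ \<beta> * (\<Sum>k\<in>UNIV. pd k A (xpart z) * raise_grad gb A k (xpart z))"
  unfolding sum_UNIV_Plus christoffel_W[OF z] warped_christoffel_simps if_zero_mult mult_if_zero sum_if_zero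
  by (simp add: sum.distrib) (simp add: sum_negf sum_distrib_left algebra_simps)

lemma pd_gb_sym: "x \<in> Mn \<Longrightarrow> pd i (\<lambda>x. gb x $ a $ b) x = pd i (\<lambda>x. gb x $ b $ a) x"
  by (rule pd_cong_open[OF open_Mn]) (auto simp: gb_sym)

lemma christoffel_gb_sym: "x \<in> Mn \<Longrightarrow> christoffel gb a b c x = christoffel gb a c b x"
  unfolding christoffel_def using pd_gb_sym[of x _ b c] by (simp add: algebra_simps)

lemma christoffel_gb_lower: "x \<in> Mn \<Longrightarrow> (\<Sum>m\<in>UNIV. gb x $ m $ n * christoffel gb m k j x)
   = (pd k (\<lambda>x. gb x $ n $ j) x + pd j (\<lambda>x. gb x $ n $ k) x - pd n (\<lambda>x. gb x $ k $ j) x) / 2"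
proof -
  assume x: "x \<in> Mn"
  define P where "P e = pd k (\<lambda>x. gb x $ e $ j) x + pd j (\<lambda>x. gb x $ e $ k) x
    - pd e (\<lambda>x. gb x $ k $ j) x" for e
  have c: "christoffel gb m k j x = (\<Sum>e\<in>UNIV. matrix_inv (gb x) $ m $ e * P e) / 2" for m
    by (simp add: christoffel_def P_def)
  have "(\<Sum>m\<in>UNIV. gb x $ m $ n * christoffel gb m k j x)
      = (\<Sum>m\<in>UNIV. \<Sum>e\<in>UNIV. gb x $ m $ n * matrix_inv (gb x) $ m $ e * P e) / 2"
    by (simp add: c sum_divide_distrib sum_distrib_left mult.assoc)
  also have "\<dots> = (\<Sum>e\<in>UNIV. (\<Sum>m\<in>UNIV. gb x $ m $ n * matrix_inv (gb x) $ m $ e) * P e) / 2"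
    by (subst sum.swap) (simp add: sum_distrib_right)
  also have "\<dots> = P n / 2"
    by (simp add: matrix_inv_mult_sym_nth[OF gb_invertible[OF x] gb_sym[OF x]] if_zero_mult)
  finally show ?thesis by (simp add: P_def)
qed

lemma pd_gb_christoffel:
  assumes x: "x \<in> Mn"
  shows "pd m (\<lambda>x. gb x $ k $ n) x
     = (\<Sum>j\<in>UNIV. gb x $ j $ n * christoffel gb j k m x)
       + (\<Sum>j\<in>UNIV. gb x $ j $ k * christoffel gb j m n x)"
  using christoffel_gb_lower[OF x, of n k m] christoffel_gb_lower[OF x, of k m n]
    pd_gb_sym[OF x, of k n m] pd_gb_sym[OF x, of m n k]
  by (simp add: field_simps)

lemma raise_grad_christoffel_gb:
  assumes x: "x \<in> Mn"
  shows "(\<Sum>m\<in>UNIV. \<Sum>j\<in>UNIV. christoffel gb m k j x * raise_grad gb A j x * gb x $ m $ n)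
    + (\<Sum>m\<in>UNIV. \<Sum>j\<in>UNIV. raise_grad gb A m x * gb x $ k $ j * christoffel gb j m n x)
    = (\<Sum>m\<in>UNIV. raise_grad gb A m x * pd m (\<lambda>x. gb x $ k $ n) x)"
proof -
  have "(\<Sum>m\<in>UNIV. raise_grad gb A m x * pd m (\<lambda>x. gb x $ k $ n) x)
      = (\<Sum>m\<in>UNIV. \<Sum>j\<in>UNIV. raise_grad gb A m x * gb x $ j $ n * christoffel gb j k m x)
        + (\<Sum>m\<in>UNIV. \<Sum>j\<in>UNIV. raise_grad gb A m x * gb x $ j $ k * christoffel gb j m n x)"
    by (simp add: pd_gb_christoffel[OF x] distrib_left sum.distrib sum_distrib_left mult.assoc)
  also have "(\<Sum>m\<in>UNIV. \<Sum>j\<in>UNIV. raise_grad gb A m x * gb x $ j $ n * christoffel gb j k m x)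
      = (\<Sum>m\<in>UNIV. \<Sum>j\<in>UNIV. christoffel gb m k j x * raise_grad gb A j x * gb x $ m $ n)"
    by (subst sum.swap) (simp add: mult_ac)
  finally show ?thesis by (simp add: gb_sym[OF x, of k])
qed

lemma div_christoffel_W_Inr:
  assumes z: "z \<in> prod_dom Xd Mn"
  shows "(\<Sum>a\<in>UNIV. pd a (christoffel W a (Inr k) (Inr n)) z)
     = (\<Sum>m\<in>UNIV. pd m (christoffel gb m k n) (xpart z)) + pd n (pd k A) (xpart z)
       + pd k (pd n A) (xpart z)
       - (\<Sum>m\<in>UNIV. pd m (raise_grad gb A m) (xpart z)) * gb (xpart z) $ k $ n
       - (\<Sum>m\<in>UNIV. raise_grad gb A m (xpart z) * pd m (\<lambda>x. gb x $ k $ n) (xpart z))"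
proof -
  let ?x = "xpart z"
  have x: "?x \<in> Mn" using z by (simp add: prod_dom_def)
  have e: "pd m (\<lambda>x. christoffel gb m k n x + (if m = n then pd k A x else 0)
    + (if m = k then pd n A x else 0)
             - raise_grad gb A m x * gb x $ k $ n) ?x
      = pd m (christoffel gb m k n) ?x + (if m = n then pd m (pd k A) ?x else 0)
        + (if m = k then pd m (pd n A) ?x else 0)
        - (pd m (raise_grad gb A m) ?x * gb ?x $ k $ n + raise_grad gb A m ?x
          * pd m (\<lambda>x. gb x $ k $ n) ?x)" for m
    using x by (simp add: pd_rules differentiable_rules)
  show ?thesis
    by (simp add: sum_UNIV_Plus pd_Inl_christoffel_W[OF z] pd_Inr_christoffel_W[OF z] e sum.distrib sum_subtractf sum_distrib_right)
qed

lemma pd_trace_christoffel_W_Inr: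
  assumes z: "z \<in> prod_dom Xd Mn"
  shows "(\<Sum>a\<in>UNIV. pd (Inr k) (christoffel W a a (Inr n)) z)
     = (\<Sum>m\<in>UNIV. pd k (christoffel gb m m n) (xpart z)) + (real CARD('d) + real CARD('n))
       * pd k (pd n A) (xpart z)"
proof -
  let ?x = "xpart z" and ?y = "ypart z"
  have x: "?x \<in> Mn" using z by (simp add: prod_dom_def)
  have e1: "pd k (\<lambda>x. warped_christoffel gd gb A (Inl \<alpha>) (Inl \<alpha>) (Inr n) ?y x) ?x
    = pd k (pd n A) ?x" for \<alpha>
    by simp
  have e2: "pd k (\<lambda>x. warped_christoffel gd gb A (Inr m) (Inr m) (Inr n) ?y x) ?x
     = pd k (christoffel gb m m n) ?x + (if m = n then pd k (pd m A) ?x else 0) + pd k (pd n A) ?x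
       - pd k (\<lambda>x. raise_grad gb A m x * gb x $ m $ n) ?x" for m
    using x by (simp add: pd_rules differentiable_rules)
  have e3: "(\<Sum>m\<in>UNIV. pd k (\<lambda>x. raise_grad gb A m x * gb x $ m $ n) ?x) = pd k (pd n A) ?x"
  proof -
    have "(\<Sum>m\<in>UNIV. pd k (\<lambda>x. raise_grad gb A m x * gb x $ m $ n) ?x)
      = pd k (\<lambda>x. \<Sum>m\<in>UNIV. raise_grad gb A m x * gb x $ m $ n) ?x"
      by (rule pd_sum[symmetric])
        (auto intro!: differentiable_mult raise_grad_differentiable[OF x] gb_differentiable[OF x])
    also have "\<dots> = pd k (pd n A) ?x"
      by (rule pd_cong_open[OF open_Mn x]) (simp add: raise_grad_lower)
    finally show ?thesis .
  qed
  have "(\<Sum>a\<in>UNIV. pd (Inr k) (christoffel W a a (Inr n)) z)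
     = (\<Sum>\<alpha>\<in>UNIV. pd k (\<lambda>x. warped_christoffel gd gb A (Inl \<alpha>) (Inl \<alpha>) (Inr n) ?y x) ?x)
       + (\<Sum>m\<in>UNIV. pd k (\<lambda>x. warped_christoffel gd gb A (Inr m) (Inr m) (Inr n) ?y x) ?x)"
    by (simp only: sum_UNIV_Plus pd_Inr_christoffel_W[OF z])
  also have "\<dots> = real CARD('d) * pd k (pd n A) ?x + ((\<Sum>m\<in>UNIV. pd k (christoffel gb m m n) ?x)
       + pd k (pd n A) ?x + real CARD('n) * pd k (pd n A) ?x - pd k (pd n A) ?x)"
    unfolding e1 e2 by (simp add: sum.distrib sum_subtractf e3)
  finally show ?thesis by (simp add: algebra_simps)
qed

lemma trace_christoffel_W_contract_Inr:
  assumes z: "z \<in> prod_dom Xd Mn"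
  shows "(\<Sum>a\<in>UNIV. \<Sum>e\<in>UNIV. christoffel W a a e z * christoffel W e (Inr k) (Inr n) z)
     = (\<Sum>j\<in>UNIV. (\<Sum>m\<in>UNIV. christoffel gb m m j (xpart z)) * christoffel gb j k n (xpart z))
       + (\<Sum>m\<in>UNIV. christoffel gb m m n (xpart z)) * pd k A (xpart z)
       + (\<Sum>m\<in>UNIV. christoffel gb m m k (xpart z)) * pd n A (xpart z)
       - (\<Sum>j\<in>UNIV. (\<Sum>m\<in>UNIV. christoffel gb m m j (xpart z)) * raise_grad gb A j (xpart z))
         * gb (xpart z) $ k $ n
       + (real CARD('d) + real CARD('n))
         * ((\<Sum>j\<in>UNIV. pd j A (xpart z) * christoffel gb j k n (xpart z))
          + 2 * pd n A (xpart z) * pd k A (xpart z)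
          - (\<Sum>j\<in>UNIV. pd j A (xpart z) * raise_grad gb A j (xpart z)) * gb (xpart z) $ k $ n)"
proof -
  let ?x = "xpart z" and ?y = "ypart z"
  have "(\<Sum>a\<in>UNIV. \<Sum>e\<in>UNIV. christoffel W a a e z * christoffel W e (Inr k) (Inr n) z)
      = (\<Sum>e\<in>UNIV. (\<Sum>a\<in>UNIV. christoffel W a a e z) * christoffel W e (Inr k) (Inr n) z)"
    by (rule sum_trace_mult_swap)
  also have "\<dots>
    = (\<Sum>\<epsilon>\<in>UNIV. (\<Sum>a\<in>UNIV. christoffel W a a (Inl \<epsilon>) z) * christoffel W (Inl \<epsilon>) (Inr k) (Inr n) z)
     + (\<Sum>j\<in>UNIV. (\<Sum>a\<in>UNIV. christoffel W a a (Inr j) z) * christoffel W (Inr j) (Inr k) (Inr n) z)"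
    by (rule sum_UNIV_Plus)
  also have "\<dots>
    = (\<Sum>j\<in>UNIV. ((\<Sum>m\<in>UNIV. christoffel gb m m j ?x) + (real CARD('d) + real CARD('n)) * pd j A ?x)
          * (christoffel gb j k n ?x + (if j = n then pd k A ?x else 0)
            + (if j = k then pd n A ?x else 0)
             - raise_grad gb A j ?x * gb ?x $ k $ n))"
    unfolding trace_christoffel_W_Inl[OF z] trace_christoffel_W_Inr[OF z]
      by (simp only: christoffel_W[OF z] warped_christoffel_simps mult_zero_right sum.neutral_const add_0)
  finally show ?thesis
    by (simp add: algebra_simps sum.distrib sum_subtractf mult_if_zero if_zero_mult sum_distrib_left sum_distrib_right)
qed

lemma christoffel_W_square_Inr:
  assumes z: "z \<in> prod_dom Xd Mn"
  shows "(\<Sum>a\<in>UNIV. \<Sum>e\<in>UNIV. christoffel W a (Inr k) e z * christoffel W e a (Inr n) z)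
     = (\<Sum>m\<in>UNIV. \<Sum>j\<in>UNIV. christoffel gb m k j (xpart z) * christoffel gb j m n (xpart z))
       + (\<Sum>m\<in>UNIV. christoffel gb m k n (xpart z) * pd m A (xpart z))
       + pd n A (xpart z) * (\<Sum>m\<in>UNIV. christoffel gb m m k (xpart z))
       + pd k A (xpart z) * (\<Sum>m\<in>UNIV. christoffel gb m m n (xpart z))
       + (\<Sum>j\<in>UNIV. pd j A (xpart z) * christoffel gb j k n (xpart z))
       - (\<Sum>m\<in>UNIV. raise_grad gb A m (xpart z) * pd m (\<lambda>x. gb x $ k $ n) (xpart z))
       + (real CARD('d) + real CARD('n) + 2) * pd k A (xpart z) * pd n A (xpart z)
       - 2 * (\<Sum>j\<in>UNIV. pd j A (xpart z) * raise_grad gb A j (xpart z)) * gb (xpart z) $ k $ n"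
proof -
  let ?x = "xpart z" and ?y = "ypart z"
  have x: "?x \<in> Mn" using z by (simp add: prod_dom_def)
  have s1: "(\<Sum>a\<in>UNIV. \<Sum>e\<in>UNIV. christoffel W a (Inr k) e z * christoffel W e a (Inr n) z)
     = (\<Sum>\<alpha>\<in>UNIV. \<Sum>\<epsilon>\<in>UNIV. warped_christoffel gd gb A (Inl \<alpha>) (Inr k) (Inl \<epsilon>) ?y ?x
       * warped_christoffel gd gb A (Inl \<epsilon>) (Inl \<alpha>) (Inr n) ?y ?x)
     + (\<Sum>\<alpha>\<in>UNIV. \<Sum>j\<in>UNIV. warped_christoffel gd gb A (Inl \<alpha>) (Inr k) (Inr j) ?y ?x
       * warped_christoffel gd gb A (Inr j) (Inl \<alpha>) (Inr n) ?y ?x)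
     + ((\<Sum>m\<in>UNIV. \<Sum>\<epsilon>\<in>UNIV. warped_christoffel gd gb A (Inr m) (Inr k) (Inl \<epsilon>) ?y ?x
       * warped_christoffel gd gb A (Inl \<epsilon>) (Inr m) (Inr n) ?y ?x)
     + (\<Sum>m\<in>UNIV. \<Sum>j\<in>UNIV. warped_christoffel gd gb A (Inr m) (Inr k) (Inr j) ?y ?x
       * warped_christoffel gd gb A (Inr j) (Inr m) (Inr n) ?y ?x))"
    by (simp only: sum_UNIV_Plus christoffel_W[OF z] sum.distrib)
  have s2: "(\<Sum>\<alpha>\<in>UNIV. \<Sum>\<epsilon>\<in>UNIV. warped_christoffel gd gb A (Inl \<alpha>) (Inr k) (Inl \<epsilon>) ?y ?x
    * warped_christoffel gd gb A (Inl \<epsilon>) (Inl \<alpha>) (Inr n) ?y ?x)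
     = real CARD('d) * pd k A ?x * pd n A ?x"
    by (simp add: if_zero_mult mult_if_zero)
  have s3: "(\<Sum>m\<in>UNIV. \<Sum>j\<in>UNIV. warped_christoffel gd gb A (Inr m) (Inr k) (Inr j) ?y ?x
    * warped_christoffel gd gb A (Inr j) (Inr m) (Inr n) ?y ?x)
   = (\<Sum>m\<in>UNIV. \<Sum>j\<in>UNIV. christoffel gb m k j ?x * christoffel gb j m n ?x)
     + (\<Sum>m\<in>UNIV. christoffel gb m k n ?x * pd m A ?x)
     + pd n A ?x * (\<Sum>m\<in>UNIV. christoffel gb m k m ?x)
     - (\<Sum>m\<in>UNIV. \<Sum>j\<in>UNIV. christoffel gb m k j ?x * raise_grad gb A j ?x * gb ?x $ m $ n)
     + pd k A ?x * (\<Sum>m\<in>UNIV. christoffel gb m m n ?x) + (\<Sum>j\<in>UNIV. pd j A ?x * christoffel gb j k n ?x)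
     - (\<Sum>m\<in>UNIV. \<Sum>j\<in>UNIV. raise_grad gb A m ?x * gb ?x $ k $ j * christoffel gb j m n ?x)
     + (real CARD('n) + 2) * pd k A ?x * pd n A ?x
     - 2 * (\<Sum>j\<in>UNIV. pd j A ?x * raise_grad gb A j ?x) * gb ?x $ k $ n"
    unfolding warped_christoffel_simps
    by (rule sum_conformal_christoffel_product[of "\<lambda>i. raise_grad gb A i ?x" "\<lambda>i j. gb ?x $ i $ j" "\<lambda>i. pd i A ?x" "\<lambda>a b c. christoffel gb a b c ?x"])
       (rule raise_grad_lower[OF x], rule gb_sym[OF x])
  have s4: "(\<Sum>m\<in>UNIV. christoffel gb m k m ?x) = (\<Sum>m\<in>UNIV. christoffel gb m m k ?x)"
    by (rule sum.cong) (auto simp: christoffel_gb_sym[OF x])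
  show ?thesis
    unfolding s1 s2 s3 s4 using raise_grad_christoffel_gb[OF x, of k n]
    by (simp add: algebra_simps)
qed

lemma ricci_W_Inl:
  assumes z: "z \<in> prod_dom Xd Mn"
  shows "ricci W (Inl \<beta>) (Inl \<delta>) z = ricci gd \<beta> \<delta> (ypart z)
      - gd (ypart z) $ \<delta> $ \<beta> * (laplacian gb A (xpart z)
          + (real CARD('d) + real CARD('n) - 2)
            * (\<Sum>k\<in>UNIV. pd k A (xpart z) * raise_grad gb A k (xpart z)))"
  unfolding ricci_christoffel_expansion[of W] ricci_christoffel_expansion[of gd]
    div_christoffel_W_Inl[OF z] pd_trace_christoffel_W_Inl[OF z]
    trace_christoffel_W_contract_Inl[OF z] christoffel_W_square_Inl[OF z]
    sum_trace_mult_swap[of "\<lambda>a b c. christoffel gd a b c (ypart z)"] laplacian_def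
  by (simp add: algebra_simps)

lemma ricci_W_Inr:
  assumes z: "z \<in> prod_dom Xd Mn"
  shows "ricci W (Inr n) (Inr k) z = ricci gb n k (xpart z)
      - (real CARD('d) + real CARD('n) - 2)
        * (hess gb A n k (xpart z) - pd n A (xpart z) * pd k A (xpart z))
      - (laplacian gb A (xpart z)
          + (real CARD('d) + real CARD('n) - 2)
            * (\<Sum>j\<in>UNIV. pd j A (xpart z) * raise_grad gb A j (xpart z)))
        * gb (xpart z) $ n $ k"
proof -
  have x: "xpart z \<in> Mn" using z by (simp add: prod_dom_def)
  have "(\<Sum>j\<in>UNIV. christoffel gb j k n (xpart z) * pd j A (xpart z))
      = (\<Sum>j\<in>UNIV. christoffel gb j n k (xpart z) * pd j A (xpart z))"
    by (simp add: christoffel_gb_sym[OF x, of _ k])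
  then show ?thesis
    unfolding ricci_christoffel_expansion[of W] ricci_christoffel_expansion[of gb]
      div_christoffel_W_Inr[OF z] pd_trace_christoffel_W_Inr[OF z]
      trace_christoffel_W_contract_Inr[OF z] christoffel_W_square_Inr[OF z]
      sum_trace_mult_swap[of "\<lambda>a b c. christoffel gb a b c (xpart z)"] laplacian_def hess_def
      pd_pd_A_commute[OF x, of k n] gb_sym[OF x, of n k]
    by (simp add: algebra_simps sum_distrib_left sum_distrib_right sum.distrib sum_subtractf)
qed

end

section \<open>Einstein equations and the Bakry--Emery bound\<close>

lemma warped_productI:
  assumes "open Xd" "open Mn" "lorentzian_on Xd gd" "riemannian_on Mn gb" "coord_smooth_on Mn A"
  shows "warped_product gd gb A Xd Mn"
proof
  fix y assume "y \<in> Xd"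
  then obtain P :: "real^'a^'a" and i0 where "invertible P"
    "transpose P ** gd y ** P = (\<chi> a b. if a = b then (if a = i0 then -1 else 1) else 0)"
    and "sym_mat (gd y)"
    using assms(3) unfolding lorentzian_on_def by blast
  then show "invertible (gd y)" "\<And>i j. gd y $ i $ j = gd y $ j $ i"
    by (auto intro: invertible_if_congruent_to_sign_diagonal sym_mat_nth)
next
  fix x assume "x \<in> Mn"
  then have "sym_mat (gb x)" "pos_def_mat (gb x)"
    using assms(4) unfolding riemannian_on_def by auto
  then show "invertible (gb x)" "\<And>i j. gb x $ i $ j = gb x $ j $ i"
    by (auto intro: pos_def_mat_invertible sym_mat_nth)
qed (use assms in \<open>auto simp: lorentzian_on_def riemannian_on_def\<close>)

context warped_product
begin

lemma hess_cmult:
  assumes x: "x \<in> Mn"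
  shows "hess gb (\<lambda>x'. c * A x') m k x = c * hess gb A m k x"
proof -
  have "pd m (pd k (\<lambda>x'. c * A x')) x = pd m (\<lambda>x'. c * pd k A x') x"
    by (intro pd_cong_open[OF open_Mn x]) (simp add: pd_cmult A_differentiable)
  also have "\<dots> = c * pd m (pd k A) x" by (rule pd_cmult[OF pd_A_differentiable[OF x]])
  finally show ?thesis
    unfolding hess_def using pd_cmult[OF A_differentiable[OF x]]
      by (simp add: algebra_simps sum_distrib_left)
qed

context
  fixes z and D \<Lambda> \<kappa> \<tau> :: real and Tz :: "real^('d + 'n)^('d + 'n)"
  assumes z: "z \<in> prod_dom Xd Mn"
    and D: "D = real CARD('d) + real CARD('n)"
    and einstein_d: "\<And>a b. ricci gd a b (ypart z) = \<Lambda> * gd (ypart z) $ a $ b"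
    and einstein: "\<And>M N. ricci W M N z = \<kappa>\<^sup>2 / 2 * (Tz $ M $ N - W z $ M $ N * \<tau> / (D - 2))"
begin

lemma laplacian_eq_einstein_trace:
  "laplacian gb A (xpart z) + (D - 2) * (\<Sum>k\<in>UNIV. pd k A (xpart z) * raise_grad gb A k (xpart z))
     = \<Lambda> - \<kappa>\<^sup>2 / 2 * (trace_d (gd (ypart z)) Tz / real CARD('d) - exp (2 * A (xpart z)) * \<tau> / (D - 2))"
proof -
  let ?y = "ypart z"
  define L where "L = laplacian gb A (xpart z)
    + (D - 2) * (\<Sum>k\<in>UNIV. pd k A (xpart z) * raise_grad gb A k (xpart z))"
  define E where "E = exp (2 * A (xpart z))"
  have y: "?y \<in> Xd" using z by (simp add: prod_dom_def)
  have block: "(\<Lambda> - L) * gd ?y $ \<beta> $ \<delta>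
      = \<kappa>\<^sup>2 / 2 * (Tz $ Inl \<beta> $ Inl \<delta> - E * gd ?y $ \<beta> $ \<delta> * \<tau> / (D - 2))"
    for \<beta> \<delta>
    using einstein[of "Inl \<beta>" "Inl \<delta>"] ricci_W_Inl[OF z, of \<beta> \<delta>] einstein_d[of \<beta> \<delta>] gd_sym[OF y, of \<delta> \<beta>]
    by (simp add: warped_metric_block_diag E_def L_def D algebra_simps)
  have "(\<Lambda> - L) * real CARD('d)
      = (\<Sum>\<beta>\<in>UNIV. \<Sum>\<delta>\<in>UNIV. matrix_inv (gd ?y) $ \<beta> $ \<delta> * ((\<Lambda> - L) * gd ?y $ \<beta> $ \<delta>))"
    by (simp add: sum_matrix_inv_mult_sym[OF gd_invertible[OF y] gd_sym[OF y], symmetric]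
        sum_distrib_left mult_ac)
  also have "\<dots> = \<kappa>\<^sup>2 / 2 * (trace_d (gd ?y) Tz - E * \<tau> / (D - 2) * real CARD('d))"
    unfolding block trace_d_def
    by (simp add: sum_matrix_inv_mult_sym[OF gd_invertible[OF y] gd_sym[OF y], symmetric]
        sum_distrib_left sum_subtractf sum_divide_distrib algebra_simps)
  finally have "L = \<Lambda> - \<kappa>\<^sup>2 / 2 * (trace_d (gd ?y) Tz / real CARD('d) - E * \<tau> / (D - 2))"
    by (simp add: field_simps)
  then show ?thesis by (simp add: L_def E_def)
qed

lemma ricci_minus_hess_eq:
  "ricci gb m k (xpart z) - (D - 2) * hess gb A m k (xpart z) =
     \<Lambda> * gb (xpart z) $ m $ k - (D - 2) * pd m A (xpart z) * pd k A (xpart z)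
     + \<kappa>\<^sup>2 / 2
       * (Tz $ Inr m $ Inr k - gb (xpart z) $ m $ k * trace_d (gd (ypart z)) Tz / real CARD('d))"
proof -
  define L where "L = laplacian gb A (xpart z)
    + (D - 2) * (\<Sum>k\<in>UNIV. pd k A (xpart z) * raise_grad gb A k (xpart z))"
  define E where "E = exp (2 * A (xpart z))"
  have "ricci gb m k (xpart z) - (D - 2) * (hess gb A m k (xpart z) - pd m A (xpart z) * pd k A (xpart z))
      - L * gb (xpart z) $ m $ k = \<kappa>\<^sup>2 / 2 * (Tz $ Inr m $ Inr k - E * gb (xpart z) $ m $ k * \<tau> / (D - 2))"
    using einstein[of "Inr m" "Inr k"] ricci_W_Inr[OF z, of m k]
    by (simp add: warped_metric_block_diag L_def E_def D)
  moreover have "L = \<Lambda> - \<kappa>\<^sup>2 / 2 * (trace_d (gd (ypart z)) Tz / real CARD('d) - E * \<tau> / (D - 2))"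
    using laplacian_eq_einstein_trace by (simp add: L_def E_def)
  ultimately show ?thesis
    by (simp add: algebra_simps)
qed

end

lemma bakry_emery_lower_bound:
  assumes x: "x \<in> Mn" and pos: "pos_def_mat (gb x)" and D: "D > 2" and \<Lambda>: "\<Lambda> < 0"
    and identity: "\<And>m k. ricci gb m k x - (D - 2) * hess gb A m k x
        = \<Lambda> * gb x $ m $ k - (D - 2) * pd m A x * pd k A x + \<kappa>\<^sup>2 / 2 * S m k"
    and S: "psd_form S"
    and \<sigma>: "(D - 2) * grad_norm gb A x \<le> \<sigma>"
  shows "psd_form (\<lambda>m k. ricci gb m k x - hess gb (\<lambda>x'. (D - 2) * A x') m k x
            + (\<bar>\<Lambda>\<bar> + \<sigma>\<^sup>2 / (D - 2)) * gb x $ m $ k)"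
proof -
  have "sqrt (\<Sum>a\<in>UNIV. \<Sum>b\<in>UNIV. matrix_inv (gb x) $ a $ b * pd a A x * pd b A x) \<le> \<sigma> / (D - 2)"
    using \<sigma> D by (simp add: grad_norm_def field_simps)
  then have "(\<Sum>a\<in>UNIV. \<Sum>b\<in>UNIV. matrix_inv (gb x) $ a $ b * pd a A x * pd b A x) \<le> (\<sigma> / (D - 2))\<^sup>2"
    by (rule sqrt_le_D)
  moreover have "sym_mat (gb x)"
    using gb_sym[OF x] by (simp add: sym_mat_def transpose_def vec_eq_iff)
  ultimately have "psd_form (\<lambda>m k. (\<sigma> / (D - 2))\<^sup>2 * gb x $ m $ k - pd m A x * pd k A x)"
    using pos by (rule psd_form_metric_minus_covector_square[rotated -1])
  then have "psd_form (\<lambda>m k. (D - 2) * ((\<sigma> / (D - 2))\<^sup>2 * gb x $ m $ k - pd m A x * pd k A x)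
                            + \<kappa>\<^sup>2 / 2 * S m k)"
    using D S by (intro psd_form_add psd_form_cmult) auto
  moreover have "ricci gb m k x - hess gb (\<lambda>x'. (D - 2) * A x') m k x + (\<bar>\<Lambda>\<bar> + \<sigma>\<^sup>2 / (D - 2)) * gb x $ m $ k
      = (D - 2) * ((\<sigma> / (D - 2))\<^sup>2 * gb x $ m $ k - pd m A x * pd k A x) + \<kappa>\<^sup>2 / 2 * S m k" for m k
  proof -
    have "(D - 2) * (\<sigma> / (D - 2))\<^sup>2 = \<sigma>\<^sup>2 / (D - 2)"
      using D by (simp add: power2_eq_square)
    then have "(D - 2) * ((\<sigma> / (D - 2))\<^sup>2 * gb x $ m $ k - pd m A x * pd k A x)
        = \<sigma>\<^sup>2 / (D - 2) * gb x $ m $ k - (D - 2) * pd m A x * pd k A x"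
      by (simp add: right_diff_distrib mult.assoc[symmetric])
    then show ?thesis
      unfolding hess_cmult[OF x] using identity[of m k] \<Lambda> by (simp add: algebra_simps)
  qed
  ultimately show ?thesis by simp
qed

end

theorem mainTheorem1:
  fixes gd :: "real^'d::finite \<Rightarrow> real^'d^'d"
    and gb :: "real^'n::finite \<Rightarrow> real^'n^'n"
    and A :: "real^'n \<Rightarrow> real"
    and T :: "real^('d + 'n) \<Rightarrow> real^('d + 'n)^('d + 'n)"
    and Xd :: "(real^'d) set" and Mn :: "(real^'n) set"
    and \<Lambda> \<kappa> \<sigma> :: real
  defines "d \<equiv> real CARD('d)" and "n \<equiv> real CARD('n)" and "D \<equiv> real CARD('d) + real CARD('n)"
  assumes dim_d: "CARD('d) \<ge> 2" and dim_n: "CARD('n) \<ge> 2"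
    and Ud_open: "open Xd" and Ud_ne: "Xd \<noteq> {}" and Ud_conn: "connected Xd"
    and Mn_open: "open Mn" and Mn_conn: "connected Mn"
    and Lneg: "\<Lambda> < 0" and kpos: "\<kappa> > 0"
    and gd_lor: "lorentzian_on Xd gd"
    and gd_maxsym: "\<forall>y\<in>Xd. \<forall>a b c e. riemann_low gd a b c e y =
                       \<Lambda> / (d - 1) * (gd y $ a $ c * gd y $ b $ e - gd y $ a $ e * gd y $ b $ c)"
    and gd_einstein: "\<forall>y\<in>Xd. \<forall>a b. ricci gd a b y = \<Lambda> * gd y $ a $ b"
    and gb_riem: "riemannian_on Mn gb"
    and A_smooth: "coord_smooth_on Mn A"
    and T_sym: "\<forall>z\<in>prod_dom Xd Mn. sym_mat (T z)"
    and einstein: "\<forall>z\<in>prod_dom Xd Mn. \<forall>M N.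
          ricci (warped_metric gd gb A) M N z =
            \<kappa>\<^sup>2 / 2 * (T z $ M $ N - warped_metric gd gb A z $ M $ N
                         * trace_wrt (warped_metric gd gb A z) (T z) / (D - 2))"
    and REC: "\<forall>z\<in>prod_dom Xd Mn.
          psd_form (\<lambda>m k. T z $ Inr m $ Inr k - gb (xpart z) $ m $ k * trace_d (gd (ypart z)) (T z) / d)"
    and sigma_nonneg: "\<sigma> \<ge> 0"
    and sigma_bound: "\<forall>x\<in>Mn. (D - 2) * grad_norm gb A x \<le> \<sigma>"
  shows "(\<forall>z\<in>prod_dom Xd Mn. \<forall>m k.
            ricci gb m k (xpart z) - (D - 2) * hess gb A m k (xpart z) =
              \<Lambda> * gb (xpart z) $ m $ k
              - (D - 2) * pd m A (xpart z) * pd k A (xpart z)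
              + \<kappa>\<^sup>2 / 2 * (T z $ Inr m $ Inr k
                             - gb (xpart z) $ m $ k * trace_d (gd (ypart z)) (T z) / d))
       \<and> (\<forall>x\<in>Mn. psd_form (\<lambda>m k.
            ricci gb m k x - hess gb (\<lambda>x'. (D - 2) * A x') m k x
            + (\<bar>\<Lambda>\<bar> + \<sigma>\<^sup>2 / (D - 2)) * gb x $ m $ k))"
proof -
  interpret warped_product gd gb A Xd Mn
    using Ud_open Mn_open gd_lor gb_riem A_smooth by (rule warped_productI)
  have identity: "ricci gb m k (xpart z) - (D - 2) * hess gb A m k (xpart z) =
      \<Lambda> * gb (xpart z) $ m $ k - (D - 2) * pd m A (xpart z) * pd k A (xpart z)
      + \<kappa>\<^sup>2 / 2 * (T z $ Inr m $ Inr k - gb (xpart z) $ m $ k * trace_d (gd (ypart z)) (T z) / d)"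
    if z: "z \<in> prod_dom Xd Mn" for z m k
  proof -
    have "ypart z \<in> Xd" using z by (simp add: prod_dom_def)
    then show ?thesis
      unfolding d_def using z einstein gd_einstein
      by (intro ricci_minus_hess_eq[OF z]) (auto simp: D_def)
  qed
  have "psd_form (\<lambda>m k. ricci gb m k x - hess gb (\<lambda>x'. (D - 2) * A x') m k x
            + (\<bar>\<Lambda>\<bar> + \<sigma>\<^sup>2 / (D - 2)) * gb x $ m $ k)" if x: "x \<in> Mn" for x
  proof -
    obtain y where "y \<in> Xd" using Ud_ne by blast
    then have z: "join y x \<in> prod_dom Xd Mn" using x by simp
    show ?thesis
    proof (rule bakry_emery_lower_bound[OF x])
      show "pos_def_mat (gb x)" using gb_riem x by (simp add: riemannian_on_def)
      show "D > 2" using dim_d dim_n by (simp add: D_def)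
    qed (use identity[OF z] REC[rule_format, OF z] Lneg sigma_bound x in auto)
  qed
  then show ?thesis using identity by blast
qed

end
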